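(* Let $\Gamma$ be a gain operator on $\ell^\infty_+(\mathcal I)$. Assume there exists a path $\sigma:\mathbb R_+\to\ell^\infty_+(\mathcal I)$ which is continuous (in norm) and increasing (i.e. $r_1\le r_2\Rightarrow \sigma(r_1)\le\sigma(r_2)$), and which satisfies: (i) there is $\rho\in\mathcal K_\infty$ with $\Gamma_\rho(\sigma(r))\le\sigma(r)$ for all $r\ge 0$; (ii) there are $\varphi_{\min},\varphi_{\max}\in\mathcal K_\infty$ with $\varphi_{\min}(r)\mathbf 1\le\sigma(r)\le\varphi_{\max}(r)\mathbf 1$ for all $r\ge0$. Then there exists a path of strict decay for $\Gamma$.
   Context: Let $\mathcal I$ be a nonempty countable index set. $\ell^\infty(\mathcal I)$ is the Banach space of real families $s=(s_i)_{i\in\mathcal I}$ with $\|s\|:=\sup_i|s_i|<\infty$, and $\ell^\infty_+(\mathcal I):=\{s\in\ell^\infty(\mathcal I):s_i\ge0\ \forall i\}$. We write $s^1\le s^2$ iff $s^1_i\le s^2_i$ for all $i$, and $s^1\ll s^2$ iff $\inf_i(s^2_i-s^1_i)>0$. $\mathbf 1$ is the vector with all entries $1$. $\mathcal K$ is the set of continuous strictly increasing $\gamma:\mathbb R_+\to\mathbb R_+$ with $\gamma(0)=0$, and $\mathcal K_\infty$ the set of unbounded $\gamma\in\mathcal K$. A function $\varphi\in\mathcal K_\infty$ acts on $\ell^\infty_+(\mathcal I)$ componentwise: $\varphi(s):=(\varphi(s_i))_i$. For $\mathcal J\subset\mathcal I$ and $s\in\ell^\infty_+(\mathcal I)$, $s_{|\mathcal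 J}$ is the vector agreeing with $s$ on $\mathcal J$ and equal to $0$ elsewhere. Gain operator: for each $i\in\mathcal I$ let $\mathcal I_i\subset\mathcal I\setminus\{i\}$ be a finite (possibly empty) set; $\mathcal G$ is the directed graph with vertex set $\mathcal I$ and edges $ji$ for $i\in\mathcal I$, $j\in\mathcal I_i$. Let $\gamma_{ij}\in\mathcal K_\infty$ ($ji\in E(\mathcal G)$) be a pointwise equicontinuous family (for all $r_0\ge0,\varepsilon>0$ there is $\delta>0$ with $|\gamma_{ij}(r)-\gamma_{ij}(r_0)|\le\varepsilon$ whenever $|r-r_0|\le\delta$, for all edges $ji$). Let $\mu_i:\ell^\infty_+(\mathcal I)\to[0,\infty]$, $i\in\mathcal I$, satisfy: (M1) there is $\xi\in\mathcal K_\infty$ with $\mu_i(0)=0$ and $\mu_i(s)\ge\xi(\|s\|)$ for all $s,i$; (M2) $0\le s^1\le s^2\Rightarrow\mu_i(s^1)\le\mu_i(s^2)$; (M3) for every finite $\mathcal J\subset\mathcal I$ and every $i$, the restriction of $\mu_i$ to $\{s: s_k=0\ \forall k\notin\mathcal J\}$ is finite-valued and continuous; (M4) for every norm-bounded $A\subset\ell^\infty_+(\mathcal I)$ and $\varepsilon>0$ there is $\delta>0$ such that for all $s^0\in A$ and $s\in\ell^\infty_+(\mathcal I)$ with $\|s-s^0\|\le\delta$ we have $\sup_i|\mu_i(s_{|\mathcal I_i})-\mu_i(s^0_{|\mathcal I_i})|\le\varepsilon$. The gain operator is $\Gamma:\ell^\infty_+(\mathcal I)\to\ell^\infty_+(\mathcal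 I)$, $\Gamma_i(s):=\mu_i([\gamma_{ij}(s_j)]_{j\in\mathcal I_i})$, where the argument is the vector with entries $\gamma_{ij}(s_j)$ at $j\in\mathcal I_i$ and $0$ elsewhere. For $\rho\in\mathcal K_\infty$, $\Gamma_\rho:=(\mathrm{id}+\rho)\circ\Gamma$. A path of strict decay for $\Gamma$ is a map $\sigma:\mathbb R_+\to\ell^\infty_+(\mathcal I)$ such that: (i) there is $\rho\in\mathcal K_\infty$ with $\Gamma_\rho(\sigma(r))\le\sigma(r)$ for all $r\ge0$; (ii) there are $\varphi_{\min},\varphi_{\max}\in\mathcal K_\infty$ with $\varphi_{\min}(r)\mathbf 1\le\sigma(r)\le\varphi_{\max}(r)\mathbf 1$ for all $r\ge0$; (iii) each component $\sigma_i$ is a $\mathcal K_\infty$-function; (iv) for every compact interval $K\subset(0,\infty)$ there are $0<l\le L$ with $l|r_1-r_2|\le|\sigma_i^{-1}(r_1)-\sigma_i^{-1}(r_2)|\le L|r_1-r_2|$ for all $r_1,r_2\in K$, $i\in\mathcal I$. *)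

theory Defs
  imports "HOL-Analysis.Analysis"
begin

text \<open>The index set is the (nonempty, countable) type 'i. Vectors of l-infinity are
  functions 'i => real; the order on them is the pointwise order of HOL functions.\<close>

definition linf_pos :: "('i \<Rightarrow> real) set" where
  "linf_pos = {s. bdd_above (range (\<lambda>i. \<bar>s i\<bar>)) \<and> (\<forall>i. 0 \<le> s i)}"

definition supnorm :: "('i \<Rightarrow> real) \<Rightarrow> real" where
  "supnorm s = (SUP i. \<bar>s i\<bar>)"

definition restr :: "('i \<Rightarrow> real) \<Rightarrow> 'i set \<Rightarrow> ('i \<Rightarrow> real)" where
  "restr s J = (\<lambda>k. if k \<in> J then s k else 0)"

definition class_K :: "(real \<Rightarrow> real) \<Rightarrow> bool" where
  "class_K g \<longleftrightarrow> continuous_on {0..} g \<and> strict_mono_on {0..} g \<and> g 0 = 0"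

definition class_Kinf :: "(real \<Rightarrow> real) \<Rightarrow> bool" where
  "class_Kinf g \<longleftrightarrow> class_K g \<and> (\<forall>M. \<exists>r\<ge>0. M < g r)"

definition Gain :: "('i \<Rightarrow> 'i set) \<Rightarrow> ('i \<Rightarrow> 'i \<Rightarrow> real \<Rightarrow> real)
     \<Rightarrow> ('i \<Rightarrow> ('i \<Rightarrow> real) \<Rightarrow> ereal) \<Rightarrow> ('i \<Rightarrow> real) \<Rightarrow> ('i \<Rightarrow> real)" where
  "Gain Ii gam mu s = (\<lambda>i. real_of_ereal (mu i (\<lambda>j. if j \<in> Ii i then gam i j (s j) else 0)))"

definition Gain_rho :: "('i \<Rightarrow> 'i set) \<Rightarrow> ('i \<Rightarrow> 'i \<Rightarrow> real \<Rightarrow> real)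
     \<Rightarrow> ('i \<Rightarrow> ('i \<Rightarrow> real) \<Rightarrow> ereal) \<Rightarrow> (real \<Rightarrow> real) \<Rightarrow> ('i \<Rightarrow> real) \<Rightarrow> ('i \<Rightarrow> real)" where
  "Gain_rho Ii gam mu \<rho> s = (\<lambda>i. Gain Ii gam mu s i + \<rho> (Gain Ii gam mu s i))"

definition gain_operator :: "('i \<Rightarrow> 'i set) \<Rightarrow> ('i \<Rightarrow> 'i \<Rightarrow> real \<Rightarrow> real)
     \<Rightarrow> ('i \<Rightarrow> ('i \<Rightarrow> real) \<Rightarrow> ereal) \<Rightarrow> bool" where
  "gain_operator Ii gam mu \<longleftrightarrow>
     \<comment> \<open>graph: finite in-neighbourhoods without self-loops\<close>
     (\<forall>i. finite (Ii i) \<and> i \<notin> Ii i) \<and>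
     \<comment> \<open>gamma_ij are K_infinity functions\<close>
     (\<forall>i. \<forall>j\<in>Ii i. class_Kinf (gam i j)) \<and>
     \<comment> \<open>pointwise equicontinuity\<close>
     (\<forall>r0\<ge>0. \<forall>\<epsilon>>0. \<exists>\<delta>>0. \<forall>i. \<forall>j\<in>Ii i. \<forall>r\<ge>0.
         \<bar>r - r0\<bar> \<le> \<delta> \<longrightarrow> \<bar>gam i j r - gam i j r0\<bar> \<le> \<epsilon>) \<and>
     \<comment> \<open>values of mu_i in [0, infinity]\<close>
     (\<forall>i. \<forall>s\<in>linf_pos. 0 \<le> mu i s) \<and>
     \<comment> \<open>(M1)\<close>
     (\<exists>\<xi>. class_Kinf \<xi> \<and> (\<forall>i. mu i (\<lambda>_. 0) = 0 \<and>
         (\<forall>s\<in>linf_pos. ereal (\<xi> (supnorm s)) \<le> mu i s))) \<and>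
     \<comment> \<open>(M2)\<close>
     (\<forall>i. \<forall>s1\<in>linf_pos. \<forall>s2\<in>linf_pos. s1 \<le> s2 \<longrightarrow> mu i s1 \<le> mu i s2) \<and>
     \<comment> \<open>(M3)\<close>
     (\<forall>J i. finite J \<longrightarrow>
         (\<forall>s\<in>{s\<in>linf_pos. \<forall>k. k \<notin> J \<longrightarrow> s k = 0}. \<bar>mu i s\<bar> \<noteq> \<infinity>) \<and>
         continuous_on {s\<in>linf_pos. \<forall>k. k \<notin> J \<longrightarrow> s k = 0} (mu i)) \<and>
     \<comment> \<open>(M4)\<close>
     (\<forall>A. A \<subseteq> linf_pos \<longrightarrow> bdd_above (supnorm ` A) \<longrightarrow>
        (\<forall>\<epsilon>>0. \<exists>\<delta>>0. \<forall>s0\<in>A. \<forall>s\<in>linf_pos. supnorm (s - s0) \<le> \<delta> \<longrightarrow>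
           (\<forall>i. \<bar>mu i (restr s (Ii i)) - mu i (restr s0 (Ii i))\<bar> \<le> ereal \<epsilon>))) \<and>
     \<comment> \<open>Gamma maps the positive cone of l-infinity into itself\<close>
     (\<forall>s\<in>linf_pos. Gain Ii gam mu s \<in> linf_pos)"

definition path_of_strict_decay :: "('i \<Rightarrow> 'i set) \<Rightarrow> ('i \<Rightarrow> 'i \<Rightarrow> real \<Rightarrow> real)
     \<Rightarrow> ('i \<Rightarrow> ('i \<Rightarrow> real) \<Rightarrow> ereal) \<Rightarrow> (real \<Rightarrow> ('i \<Rightarrow> real)) \<Rightarrow> bool" where
  "path_of_strict_decay Ii gam mu \<sigma> \<longleftrightarrow>
     (\<forall>r\<ge>0. \<sigma> r \<in> linf_pos) \<and>
     (\<exists>\<rho>. class_Kinf \<rho> \<and> (\<forall>r\<ge>0. Gain_rho Ii gam mu \<rho> (\<sigma> r) \<le> \<sigma> r)) \<and>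
     (\<exists>\<phi>min \<phi>max. class_Kinf \<phi>min \<and> class_Kinf \<phi>max \<and>
        (\<forall>r\<ge>0. (\<lambda>_. \<phi>min r) \<le> \<sigma> r \<and> \<sigma> r \<le> (\<lambda>_. \<phi>max r))) \<and>
     (\<forall>i. class_Kinf (\<lambda>r. \<sigma> r i)) \<and>
     (\<forall>a b. 0 < a \<longrightarrow> a \<le> b \<longrightarrow> (\<exists>l L. 0 < l \<and> l \<le> L \<and>
        (\<forall>r1\<in>{a..b}. \<forall>r2\<in>{a..b}. \<forall>i.
           l * \<bar>r1 - r2\<bar> \<le> \<bar>the_inv_into {0..} (\<lambda>r. \<sigma> r i) r1 - the_inv_into {0..} (\<lambda>r. \<sigma> r i) r2\<bar> \<and>
           \<bar>the_inv_into {0..} (\<lambda>r. \<sigma> r i) r1 - the_inv_into {0..} (\<lambda>r. \<sigma> r i) r2\<bar> \<le> L * \<bar>r1 - r2\<bar>)))"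

end

theory Submission
  imports Defs
begin

text \<open>Replacing \<rho> by \<rho>/2 leaves a K-infinity slack c below the given path:
  Gamma_{\<rho>/2}(\<sigma>(t)) \<le> \<sigma>(t) - 2 c(t). Gamma is uniformly continuous on bounded parts of the
  cone, by (M4) and the equicontinuity of the gains, so uniformly on compact t-intervals in (0, \<infinity>)
  we still have Gamma_{\<rho>/2}(\<sigma>(t')) \<le> \<sigma>(t) - c(t) for t \<le> t' \<le> t + h. This yields a two-sided
  grid t_k, k \<in> \<int>, tending to 0 and to \<infinity>, of such admissible steps. Lowering \<sigma>(t_k) by less
  than c(t_k) gives nodes that increase in k at a rate independent of the component, and
  interpolating them linearly in the variable r - 1/r gives a path that, between t_k and t_{k+1},
  lies below \<sigma>(t_{k+1}) and above \<sigma>(t_k) - c(t_k). Hence it decays strictly, and its components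
  are locally bi-Lipschitz uniformly in the component, which also controls their inverses.\<close>

section \<open>Comparison functions\<close>

lemma class_K_less: "class_K g \<Longrightarrow> 0 \<le> x \<Longrightarrow> x < y \<Longrightarrow> g x < g y"
  unfolding class_K_def strict_mono_on_def by auto

lemma class_K_mono: "class_K g \<Longrightarrow> 0 \<le> x \<Longrightarrow> x \<le> y \<Longrightarrow> g x \<le> g y"
  using class_K_less[of g x y] by (cases "x = y") auto

lemma class_K_zero: "class_K g \<Longrightarrow> g 0 = 0"
  unfolding class_K_def by auto

lemma class_K_nonneg: "class_K g \<Longrightarrow> 0 \<le> x \<Longrightarrow> 0 \<le> g x"
  using class_K_mono[of g 0 x] class_K_zero[of g] by auto

lemma class_K_pos: "class_K g \<Longrightarrow> 0 < x \<Longrightarrow> 0 < g x"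
  using class_K_less[of g 0 x] class_K_zero[of g] by auto

lemma class_K_continuous_on: "class_K g \<Longrightarrow> continuous_on {0..} g"
  unfolding class_K_def by auto

lemma class_K_small:
  assumes "class_K g" "0 < \<epsilon>"
  obtains \<delta> where "0 < \<delta>" "\<And>x. 0 \<le> x \<Longrightarrow> x \<le> \<delta> \<Longrightarrow> g x < \<epsilon>"
proof -
  have "continuous (at 0 within {0..}) g"
    using class_K_continuous_on[OF assms(1)] by (simp add: continuous_on_eq_continuous_within)
  then obtain d where d: "0 < d" "\<forall>x\<in>{0..}. dist x 0 < d \<longrightarrow> dist (g x) (g 0) < \<epsilon>"
    using assms(2) unfolding continuous_within_eps_delta by blast
  show ?thesis
  proof (rule that[of "d/2"])
    fix x :: real assume "0 \<le> x" "x \<le> d/2"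
    with d have "dist (g x) (g 0) < \<epsilon>" by (auto simp: dist_real_def)
    then show "g x < \<epsilon>" using class_K_zero[OF assms(1)] by (simp add: dist_real_def)
  qed (use d in auto)
qed

lemma class_Kinf_imp_class_K: "class_Kinf g \<Longrightarrow> class_K g"
  unfolding class_Kinf_def by auto

lemma class_Kinf_eventually_gt:
  assumes "class_Kinf g"
  obtains r where "0 \<le> r" "\<And>x. r \<le> x \<Longrightarrow> M < g x"
proof -
  obtain r where "0 \<le> r" "M < g r"
    using assms unfolding class_Kinf_def by auto
  with class_K_mono[OF class_Kinf_imp_class_K[OF assms], of r] show ?thesis
    by (intro that[of r]) force+
qed

lemma class_KinfI:
  assumes "continuous_on {0..} g" "\<And>x y. 0 \<le> x \<Longrightarrow> x < y \<Longrightarrow> g x < g y" "g 0 = 0"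
    "\<And>M. \<exists>r\<ge>0. M < g r"
  shows "class_Kinf g"
  using assms unfolding class_Kinf_def class_K_def strict_mono_on_def by auto

lemma class_Kinf_min:
  assumes f: "class_Kinf f" and g: "class_Kinf g"
  shows "class_Kinf (\<lambda>x. min (f x) (g x))"
proof (rule class_KinfI)
  note fK = class_Kinf_imp_class_K[OF f] and gK = class_Kinf_imp_class_K[OF g]
  show "continuous_on {0..} (\<lambda>x. min (f x) (g x))"
    using class_K_continuous_on[OF fK] class_K_continuous_on[OF gK] by (intro continuous_on_min)
  show "min (f x) (g x) < min (f y) (g y)" if "0 \<le> x" "x < y" for x y
    using class_K_less[OF fK that] class_K_less[OF gK that] by linarith
  show "min (f 0) (g 0) = 0"
    using class_K_zero[OF fK] class_K_zero[OF gK] by simp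
  fix M
  obtain r1 where "0 \<le> r1" "\<And>x. r1 \<le> x \<Longrightarrow> M < f x" using class_Kinf_eventually_gt[OF f, where M=M] by blast
  moreover obtain r2 where "0 \<le> r2" "\<And>x. r2 \<le> x \<Longrightarrow> M < g x" using class_Kinf_eventually_gt[OF g, where M=M] by blast
  ultimately show "\<exists>r\<ge>0. M < min (f r) (g r)"
    by (intro exI[of _ "max r1 r2"]) auto
qed

lemma class_Kinf_cmult:
  assumes f: "class_Kinf f" and c: "0 < c"
  shows "class_Kinf (\<lambda>x. c * f x)"
proof (rule class_KinfI)
  note fK = class_Kinf_imp_class_K[OF f]
  show "continuous_on {0..} (\<lambda>x. c * f x)"
    using class_K_continuous_on[OF fK] by (intro continuous_intros)
  show "c * f x < c * f y" if "0 \<le> x" "x < y" for x y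
    using class_K_less[OF fK that] c by simp
  show "c * f 0 = 0" using class_K_zero[OF fK] by simp
  fix M
  obtain r where "0 \<le> r" "M / c < f r" using f unfolding class_Kinf_def by blast
  with c show "\<exists>r\<ge>0. M < c * f r"
    by (intro exI[of _ r]) (auto simp: field_simps)
qed

lemma class_Kinf_comp:
  assumes f: "class_Kinf f" and g: "class_Kinf g"
  shows "class_Kinf (\<lambda>x. f (g x))"
proof (rule class_KinfI)
  note fK = class_Kinf_imp_class_K[OF f] and gK = class_Kinf_imp_class_K[OF g]
  have "g ` {0..} \<subseteq> {0..}" using class_K_nonneg[OF gK] by auto
  then show "continuous_on {0..} (\<lambda>x. f (g x))"
    by (rule continuous_on_compose2[OF class_K_continuous_on[OF fK] class_K_continuous_on[OF gK]])
  show "f (g x) < f (g y)" if "0 \<le> x" "x < y" for x y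
    using class_K_less[OF fK class_K_nonneg[OF gK] class_K_less[OF gK that]] that by simp
  show "f (g 0) = 0" using class_K_zero[OF fK] class_K_zero[OF gK] by simp
  fix M
  obtain r where r: "0 \<le> r" "M < f r" using f unfolding class_Kinf_def by blast
  obtain s where s: "0 \<le> s" "r < g s" using g unfolding class_Kinf_def by blast
  have "f r \<le> f (g s)" using class_K_mono[OF fK r(1)] s(2) by simp
  with r s show "\<exists>r\<ge>0. M < f (g r)" by (intro exI[of _ s]) auto
qed

lemma abs_le_supnorm: "bdd_above (range (\<lambda>i. \<bar>s i\<bar>)) \<Longrightarrow> \<bar>s i\<bar> \<le> supnorm s"
  unfolding supnorm_def by (rule cSUP_upper) auto

lemma supnorm_le: "(\<And>i. \<bar>s i\<bar> \<le> c) \<Longrightarrow> supnorm s \<le> c"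
  unfolding supnorm_def by (rule cSUP_least) auto

lemma linf_posI: "(\<And>i. 0 \<le> s i) \<Longrightarrow> (\<And>i. s i \<le> B) \<Longrightarrow> s \<in> linf_pos"
  unfolding linf_pos_def bdd_above_def by auto

lemma linf_pos_nonneg: "s \<in> linf_pos \<Longrightarrow> 0 \<le> s i"
  unfolding linf_pos_def by auto

lemma abs_diff_le_supnorm:
  assumes "s1 \<in> linf_pos" "s2 \<in> linf_pos"
  shows "\<bar>s1 j - s2 j\<bar> \<le> supnorm (s1 - s2)"
proof -
  obtain B1 B2 where "\<forall>i. \<bar>s1 i\<bar> \<le> B1" "\<forall>i. \<bar>s2 i\<bar> \<le> B2"
    using assms unfolding linf_pos_def bdd_above_def by auto
  then have "bdd_above (range (\<lambda>i. \<bar>(s1 - s2) i\<bar>))"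
    unfolding bdd_above_def by (intro exI[of _ "B1 + B2"]) (auto intro: order_trans[OF abs_triangle_ineq4] add_mono)
  then show ?thesis using abs_le_supnorm[of "s1 - s2" j] by simp
qed

section \<open>Locally bi-Lipschitz increasing functions\<close>

definition slopes_within :: "real \<Rightarrow> real \<Rightarrow> real set \<Rightarrow> (real \<Rightarrow> real) \<Rightarrow> bool" where
  "slopes_within m M S F \<longleftrightarrow>
     (\<forall>r\<in>S. \<forall>r'\<in>S. r \<le> r' \<longrightarrow> m * (r' - r) \<le> F r' - F r \<and> F r' - F r \<le> M * (r' - r))"

definition locally_bilipschitz_incr :: "(real \<Rightarrow> real) \<Rightarrow> bool" where
  "locally_bilipschitz_incr F \<longleftrightarrow>
     (\<forall>a b. 0 < a \<longrightarrow> a \<le> b \<longrightarrow> (\<exists>m M. 0 < m \<and> m \<le> M \<and> slopes_within m M {a..b} F))"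

definition uniformly_locally_bilipschitz_incr :: "(real \<Rightarrow> 'j \<Rightarrow> real) \<Rightarrow> bool" where
  "uniformly_locally_bilipschitz_incr G \<longleftrightarrow>
     (\<forall>a b. 0 < a \<longrightarrow> a \<le> b \<longrightarrow>
        (\<exists>m M. 0 < m \<and> m \<le> M \<and> (\<forall>j. slopes_within m M {a..b} (\<lambda>r. G r j))))"

lemma slopes_withinD:
  "slopes_within m M S F \<Longrightarrow> r \<in> S \<Longrightarrow> r' \<in> S \<Longrightarrow> r \<le> r' \<Longrightarrow>
     m * (r' - r) \<le> F r' - F r \<and> F r' - F r \<le> M * (r' - r)"
  unfolding slopes_within_def by blast

lemma slopes_within_abs:
  assumes "slopes_within m M S F" "0 \<le> m" "r \<in> S" "r' \<in> S"
  shows "m * \<bar>r' - r\<bar> \<le> \<bar>F r' - F r\<bar> \<and> \<bar>F r' - F r\<bar> \<le> M * \<bar>r' - r\<bar>"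
proof -
  have *: "m * \<bar>b - a\<bar> \<le> \<bar>F b - F a\<bar> \<and> \<bar>F b - F a\<bar> \<le> M * \<bar>b - a\<bar>"
    if "a \<in> S" "b \<in> S" "a \<le> b" for a b
  proof -
    have "0 \<le> m * (b - a)" using that assms(2) by simp
    with slopes_withinD[OF assms(1) that] that show ?thesis by arith
  qed
  show ?thesis
    using *[of r r'] *[of r' r] assms(3,4) by (cases "r \<le> r'") (auto simp: abs_minus_commute)
qed

lemma slopes_within_lipschitz_on:
  assumes "slopes_within m M S F" "0 \<le> m" "m \<le> M"
  shows "M-lipschitz_on S F"
  using slopes_within_abs[OF assms(1,2)] assms(2,3)
  by (intro lipschitz_onI) (auto simp: dist_real_def)

lemma uniformly_locally_bilipschitz_incrD:
  assumes "uniformly_locally_bilipschitz_incr G"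
  shows "locally_bilipschitz_incr (\<lambda>r. G r j)"
  unfolding locally_bilipschitz_incr_def
proof (intro allI impI)
  fix a b :: real assume "0 < a" "a \<le> b"
  with assms obtain m M where "0 < m" "m \<le> M" "\<forall>j. slopes_within m M {a..b} (\<lambda>r. G r j)"
    unfolding uniformly_locally_bilipschitz_incr_def by blast
  then show "\<exists>m M. 0 < m \<and> m \<le> M \<and> slopes_within m M {a..b} (\<lambda>r. G r j)" by blast
qed

lemma slopes_within_INF:
  assumes "\<And>j. slopes_within m M S (\<lambda>r. G r j)" "\<And>r. bdd_below (range (G r))"
  shows "slopes_within m M S (\<lambda>r. INF j. G r j)"
  unfolding slopes_within_def
proof (intro ballI impI conjI)
  fix r r' assume r: "r \<in> S" "r' \<in> S" "r \<le> r'"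
  note sl = slopes_withinD[OF assms(1) r]
  show "m * (r' - r) \<le> (INF j. G r' j) - (INF j. G r j)"
  proof -
    have "(INF j. G r j) + m * (r' - r) \<le> G r' j" for j
      using cINF_lower[OF assms(2), of j r] sl[of j] by simp
    then have "(INF j. G r j) + m * (r' - r) \<le> (INF j. G r' j)" by (intro cINF_greatest) auto
    then show ?thesis by simp
  qed
  show "(INF j. G r' j) - (INF j. G r j) \<le> M * (r' - r)"
  proof -
    have "(INF j. G r' j) - M * (r' - r) \<le> G r j" for j
      using cINF_lower[OF assms(2), of j r'] sl[of j] by simp
    then have "(INF j. G r' j) - M * (r' - r) \<le> (INF j. G r j)" by (intro cINF_greatest) auto
    then show ?thesis by simp
  qed
qed

lemma slopes_within_SUP:
  assumes "\<And>j. slopes_within m M S (\<lambda>r. G r j)" "\<And>r. bdd_above (range (G r))"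
  shows "slopes_within m M S (\<lambda>r. SUP j. G r j)"
  unfolding slopes_within_def
proof (intro ballI impI conjI)
  fix r r' assume r: "r \<in> S" "r' \<in> S" "r \<le> r'"
  note sl = slopes_withinD[OF assms(1) r]
  show "m * (r' - r) \<le> (SUP j. G r' j) - (SUP j. G r j)"
  proof -
    have "G r j \<le> (SUP j. G r' j) - m * (r' - r)" for j
      using cSUP_upper[OF _ assms(2), of j r'] sl[of j] by simp
    then have "(SUP j. G r j) \<le> (SUP j. G r' j) - m * (r' - r)" by (intro cSUP_least) auto
    then show ?thesis by simp
  qed
  show "(SUP j. G r' j) - (SUP j. G r j) \<le> M * (r' - r)"
  proof -
    have "G r' j \<le> (SUP j. G r j) + M * (r' - r)" for j
      using cSUP_upper[OF _ assms(2), of j r] sl[of j] by simp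
    then have "(SUP j. G r' j) \<le> (SUP j. G r j) + M * (r' - r)" by (intro cSUP_least) auto
    then show ?thesis by simp
  qed
qed

lemma locally_bilipschitz_incr_INF:
  assumes "uniformly_locally_bilipschitz_incr G" "\<And>r. bdd_below (range (G r))"
  shows "locally_bilipschitz_incr (\<lambda>r. INF j. G r j)"
  unfolding locally_bilipschitz_incr_def
proof (intro allI impI)
  fix a b :: real assume "0 < a" "a \<le> b"
  with assms(1) obtain m M where mM: "0 < m" "m \<le> M" "\<forall>j. slopes_within m M {a..b} (\<lambda>r. G r j)"
    unfolding uniformly_locally_bilipschitz_incr_def by blast
  have "slopes_within m M {a..b} (\<lambda>r. INF j. G r j)"
    by (rule slopes_within_INF) (use mM(3) assms(2) in auto)
  with mM(1,2) show "\<exists>m M. 0 < m \<and> m \<le> M \<and> slopes_within m M {a..b} (\<lambda>r. INF j. G r j)"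
    by blast
qed

lemma locally_bilipschitz_incr_SUP:
  assumes "uniformly_locally_bilipschitz_incr G" "\<And>r. bdd_above (range (G r))"
  shows "locally_bilipschitz_incr (\<lambda>r. SUP j. G r j)"
  unfolding locally_bilipschitz_incr_def
proof (intro allI impI)
  fix a b :: real assume "0 < a" "a \<le> b"
  with assms(1) obtain m M where mM: "0 < m" "m \<le> M" "\<forall>j. slopes_within m M {a..b} (\<lambda>r. G r j)"
    unfolding uniformly_locally_bilipschitz_incr_def by blast
  have "slopes_within m M {a..b} (\<lambda>r. SUP j. G r j)"
    by (rule slopes_within_SUP) (use mM(3) assms(2) in auto)
  with mM(1,2) show "\<exists>m M. 0 < m \<and> m \<le> M \<and> slopes_within m M {a..b} (\<lambda>r. SUP j. G r j)"
    by blast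
qed

lemma locally_bilipschitz_incr_less:
  assumes "locally_bilipschitz_incr F" "0 < a" "a < b"
  shows "F a < F b"
proof -
  obtain m M where "0 < m" "slopes_within m M {a..b} F"
    using assms unfolding locally_bilipschitz_incr_def by (meson less_imp_le)
  with assms(2,3) have "0 < m * (b - a)" "m * (b - a) \<le> F b - F a"
    using slopes_withinD[of m M "{a..b}" F a b] by auto
  then show ?thesis by simp
qed

lemma locally_bilipschitz_incr_continuous_at:
  assumes "locally_bilipschitz_incr F" "0 < x"
  shows "isCont F x"
proof -
  have "0 < x/2" "x/2 \<le> 2*x" using assms(2) by simp_all
  then obtain m M where mM: "0 < m" "m \<le> M" "slopes_within m M {x/2..2*x} F"
    using assms(1) unfolding locally_bilipschitz_incr_def by blast
  then have "continuous_on {x/2..2*x} F"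
    using lipschitz_on_continuous_on[OF slopes_within_lipschitz_on[OF mM(3)]] by simp
  moreover have "x \<in> interior {x/2..2*x}" using assms(2) by simp
  ultimately show ?thesis by (rule continuous_on_interior)
qed

lemma class_Kinf_if_locally_bilipschitz_incr:
  assumes bilip: "locally_bilipschitz_incr F" and zero: "F 0 = 0"
    and nonneg: "\<And>r. 0 \<le> r \<Longrightarrow> 0 \<le> F r"
    and small: "\<And>\<epsilon>. 0 < \<epsilon> \<Longrightarrow> \<exists>\<delta>>0. \<forall>r. 0 < r \<longrightarrow> r \<le> \<delta> \<longrightarrow> F r \<le> \<epsilon>"
    and big: "\<And>B. \<exists>r\<ge>0. B < F r"
  shows "class_Kinf F"
proof (rule class_KinfI)
  show "F x < F y" if "0 \<le> x" "x < y" for x y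
  proof (cases "x = 0")
    case True
    with that locally_bilipschitz_incr_less[OF bilip, of "y/2" y] nonneg[of "y/2"] zero
    show ?thesis by simp
  qed (use that locally_bilipschitz_incr_less[OF bilip] in simp)
  show "F 0 = 0" by (fact zero)
  show "\<exists>r\<ge>0. M < F r" for M by (fact big)
  have "continuous (at 0 within {0..}) F"
    unfolding continuous_within_eps_delta
  proof (intro allI impI)
    fix e :: real assume "0 < e"
    then obtain \<delta> where \<delta>: "0 < \<delta>" "\<forall>r. 0 < r \<longrightarrow> r \<le> \<delta> \<longrightarrow> F r \<le> e/2"
      using small[of "e/2"] by auto
    have "dist (F x') (F 0) < e" if "x' \<in> {0..}" "dist x' 0 < \<delta>" for x'
    proof -
      from that \<delta> have "F x' \<le> e/2 \<or> x' = 0" by (auto simp: dist_real_def)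
      with zero nonneg[of x'] that \<open>0 < e\<close> show ?thesis by (auto simp: dist_real_def)
    qed
    with \<delta>(1) show "\<exists>d>0. \<forall>x'\<in>{0..}. dist x' 0 < d \<longrightarrow> dist (F x') (F 0) < e" by blast
  qed
  then show "continuous_on {0..} F"
    using locally_bilipschitz_incr_continuous_at[OF bilip]
    by (metis atLeast_iff continuous_at_imp_continuous_within continuous_on_eq_continuous_within
        order_less_le)
qed

lemma class_Kinf_the_inv_into:
  assumes "class_Kinf F" "0 \<le> v"
  shows "0 \<le> the_inv_into {0..} F v" "F (the_inv_into {0..} F v) = v"
proof -
  note FK = class_Kinf_imp_class_K[OF assms(1)]
  have inj: "inj_on F {0..}"
    using FK unfolding class_K_def by (auto intro: strict_mono_on_imp_inj_on)
  obtain b where b: "0 \<le> b" "v < F b" using assms(1) unfolding class_Kinf_def by blast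
  have "continuous_on {0..b} F"
    using class_K_continuous_on[OF FK] by (rule continuous_on_subset) auto
  then obtain x where "0 \<le> x" "F x = v"
    using IVT'[of F 0 v b] assms(2) b class_K_zero[OF FK] by auto
  then have v: "v \<in> F ` {0..}" by auto
  show "F (the_inv_into {0..} F v) = v" by (rule f_the_inv_into_f[OF inj v])
  show "0 \<le> the_inv_into {0..} F v" using the_inv_into_into[OF inj v, of "{0..}"] by simp
qed

lemma class_Kinf_the_inv_into_bounds:
  assumes F: "class_Kinf F" and v: "v \<in> {a..b}" "0 < a" and R: "0 \<le> R" "b < F R"
    and small: "\<And>r. 0 < r \<Longrightarrow> r \<le> \<delta> \<Longrightarrow> F r < a"
  shows "the_inv_into {0..} F v \<in> {\<delta>..R}"
proof -
  define x where "x = the_inv_into {0..} F v"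
  have "0 \<le> v" using v by simp
  then have x: "0 \<le> x" "F x = v" unfolding x_def using class_Kinf_the_inv_into[OF F] by auto
  have "x \<noteq> 0" using x class_K_zero[OF class_Kinf_imp_class_K[OF F]] v by auto
  then have "\<delta> \<le> x" using small[of x] x v by force
  moreover have "x \<le> R"
  proof (rule ccontr)
    assume "\<not> x \<le> R"
    then have "F R < F x" using class_K_less[OF class_Kinf_imp_class_K[OF F] R(1)] by simp
    with x v R(2) show False by simp
  qed
  ultimately show ?thesis unfolding x_def by simp
qed

text \<open>For values in [a, b] all the inverses lie in one compact interval [\<delta>, R] with \<delta> > 0, on which
  the slopes are uniformly bounded above and below.\<close>
lemma uniform_inverse_slopes:
  fixes G :: "real \<Rightarrow> 'j \<Rightarrow> real"
  assumes Kinf: "\<And>j. class_Kinf (\<lambda>r. G r j)"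
    and bilip: "uniformly_locally_bilipschitz_incr G"
    and small: "\<And>\<epsilon>. 0 < \<epsilon> \<Longrightarrow> \<exists>\<delta>>0. \<forall>j r. 0 < r \<longrightarrow> r \<le> \<delta> \<longrightarrow> G r j \<le> \<epsilon>"
    and big: "\<And>B. \<exists>r\<ge>0. \<forall>j. B < G r j"
    and ab: "0 < a" "a \<le> b"
  shows "\<exists>l L. 0 < l \<and> l \<le> L \<and>
    (\<forall>r1\<in>{a..b}. \<forall>r2\<in>{a..b}. \<forall>j.
      l * \<bar>r1 - r2\<bar> \<le> \<bar>the_inv_into {0..} (\<lambda>r. G r j) r1 - the_inv_into {0..} (\<lambda>r. G r j) r2\<bar> \<and>
      \<bar>the_inv_into {0..} (\<lambda>r. G r j) r1 - the_inv_into {0..} (\<lambda>r. G r j) r2\<bar> \<le> L * \<bar>r1 - r2\<bar>)"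
proof -
  define inv where "inv j = the_inv_into {0..} (\<lambda>r. G r j)" for j
  obtain \<delta> where \<delta>: "0 < \<delta>" "\<forall>j r. 0 < r \<longrightarrow> r \<le> \<delta> \<longrightarrow> G r j \<le> a/2"
    using small[of "a/2"] ab by auto
  obtain R where R: "0 \<le> R" "\<forall>j. b < G R j" using big by blast
  have below_a: "G r j < a" if "0 < r" "r \<le> \<delta>" for j r
  proof -
    have "G r j \<le> a/2" using \<delta>(2) that by blast
    with ab show ?thesis by simp
  qed
  have inv_mem: "inv j v \<in> {\<delta>..R}" if "v \<in> {a..b}" for j v
    unfolding inv_def
    by (rule class_Kinf_the_inv_into_bounds[OF Kinf that ab(1) R(1)]) (use R(2) below_a in auto)
  have inv_eq: "G (inv j v) j = v" if "v \<in> {a..b}" for j v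
    using class_Kinf_the_inv_into(2)[OF Kinf] that ab unfolding inv_def by simp
  have "\<delta> \<le> R" using inv_mem[of a undefined] ab by simp
  with bilip \<delta>(1) obtain m M where mM: "0 < m" "m \<le> M" "\<And>j. slopes_within m M {\<delta>..R} (\<lambda>r. G r j)"
    unfolding uniformly_locally_bilipschitz_incr_def by blast
  have bounds: "1/M * \<bar>r1 - r2\<bar> \<le> \<bar>inv j r1 - inv j r2\<bar> \<and> \<bar>inv j r1 - inv j r2\<bar> \<le> 1/m * \<bar>r1 - r2\<bar>"
    if "r1 \<in> {a..b}" "r2 \<in> {a..b}" for r1 r2 j
  proof -
    have "m * \<bar>inv j r1 - inv j r2\<bar> \<le> \<bar>r1 - r2\<bar> \<and> \<bar>r1 - r2\<bar> \<le> M * \<bar>inv j r1 - inv j r2\<bar>"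
      using slopes_within_abs[OF mM(3)[of j] _ inv_mem[OF that(2), where j=j] inv_mem[OF that(1), where j=j]]
        inv_eq[OF that(1), where j=j] inv_eq[OF that(2), where j=j] mM(1) by simp
    with mM(1,2) show ?thesis
      by (auto simp: mult.commute intro: mult_imp_div_pos_le mult_imp_le_div_pos)
  qed
  have "0 < 1/M" "1/M \<le> 1/m" using mM by (auto simp: frac_le)
  with bounds show ?thesis
    unfolding inv_def by (intro exI[of _ "1/M"] exI[of _ "1/m"] conjI ballI allI) simp_all
qed

lemma slopes_within_cong:
  "(\<And>r. r \<in> S \<Longrightarrow> F r = G r) \<Longrightarrow> slopes_within m M S F \<longleftrightarrow> slopes_within m M S G"
  unfolding slopes_within_def by simp

lemma slopes_within_compose:
  assumes g: "slopes_within m1 M1 S g" and F: "slopes_within m2 M2 T F"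
    and "g ` S \<subseteq> T" "0 \<le> m1" "0 \<le> m2" "m2 \<le> M2"
  shows "slopes_within (m2 * m1) (M2 * M1) S (\<lambda>r. F (g r))"
  unfolding slopes_within_def
proof (intro ballI impI)
  fix r r' assume r: "r \<in> S" "r' \<in> S" "r \<le> r'"
  note gr = slopes_withinD[OF g r]
  moreover have "0 \<le> m1 * (r' - r)" using assms(4) r(3) by simp
  ultimately have "g r \<le> g r'" by linarith
  with assms(3) r have Fr: "m2 * (g r' - g r) \<le> F (g r') - F (g r) \<and> F (g r') - F (g r) \<le> M2 * (g r' - g r)"
    by (intro slopes_withinD[OF F]) auto
  have "m2 * (m1 * (r' - r)) \<le> m2 * (g r' - g r)" using gr assms(5) by (intro mult_left_mono) auto
  moreover have "M2 * (g r' - g r) \<le> M2 * (M1 * (r' - r))" using gr assms(5,6) by (intro mult_left_mono) auto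
  ultimately show "m2 * m1 * (r' - r) \<le> F (g r') - F (g r) \<and> F (g r') - F (g r) \<le> M2 * M1 * (r' - r)"
    using Fr by (simp add: mult.assoc)
qed

lemma slopes_within_diff_inverse:
  assumes "0 < a"
  shows "slopes_within 1 (1 + 1 / a\<^sup>2) {a..b} (\<lambda>r. r - 1 / r)"
  unfolding slopes_within_def
proof (intro ballI impI)
  fix r r' :: real assume r: "r \<in> {a..b}" "r' \<in> {a..b}" "r \<le> r'"
  with assms have "0 < r" "0 < r'" by auto
  then have eq: "(r' - 1 / r') - (r - 1 / r) = (r' - r) + (r' - r) / (r * r')"
    by (simp add: field_simps)
  have "a\<^sup>2 \<le> r * r'" using assms r by (simp add: power2_eq_square mult_mono)
  then have "(r' - r) / (r * r') \<le> (r' - r) / a\<^sup>2"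
    using assms r by (intro divide_left_mono) auto
  moreover have "0 \<le> (r' - r) / (r * r')" using r \<open>0 < r\<close> \<open>0 < r'\<close> by simp
  ultimately show "1 * (r' - r) \<le> (r' - 1 / r') - (r - 1 / r) \<and>
      (r' - 1 / r') - (r - 1 / r) \<le> (1 + 1 / a\<^sup>2) * (r' - r)"
    unfolding eq by (simp add: algebra_simps)
qed

section \<open>Piecewise linear interpolation\<close>

lemma slopes_within_iff_mono_on:
  "slopes_within m M S F \<longleftrightarrow> mono_on S (\<lambda>u. F u - m * u) \<and> mono_on S (\<lambda>u. M * u - F u)"
  unfolding slopes_within_def mono_on_def by (auto simp: algebra_simps)

lemma mono_on_Icc_int_segments:
  fixes f :: "real \<Rightarrow> 'a::order"
  assumes "\<And>k. K1 \<le> k \<Longrightarrow> k < K2 \<Longrightarrow> mono_on {of_int k..of_int k + 1} f"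
  shows "mono_on {of_int K1..of_int K2} f"
proof (cases "K1 \<le> K2")
  case False
  then show ?thesis by (intro mono_onI) simp
next
  case True
  then show ?thesis using assms
  proof (induction K2 rule: int_ge_induct)
    case base
    then show ?case by (intro mono_onI) simp
  next
    case (step K)
    then have left: "mono_on {of_int K1..of_int K} f"
      and right: "mono_on {of_int K..of_int K + 1} f" by auto
    show ?case
    proof (rule mono_onI)
      fix r s :: real assume r: "r \<in> {of_int K1..of_int (K + 1)}" and s: "s \<in> {of_int K1..of_int (K + 1)}"
        and "r \<le> s"
      consider "s \<le> of_int K" | "of_int K \<le> r" | "r \<le> of_int K" "of_int K \<le> s" by linarith
      then show "f r \<le> f s"
      proof cases
        case 1 with r s \<open>r \<le> s\<close> show ?thesis by (auto intro: mono_onD[OF left])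
      next
        case 2 with r s \<open>r \<le> s\<close> show ?thesis by (auto intro: mono_onD[OF right])
      next
        case 3
        with r s step.hyps have "f r \<le> f (of_int K)" "f (of_int K) \<le> f s"
          by (auto intro: mono_onD[OF left] mono_onD[OF right])
        then show ?thesis by (rule order_trans)
      qed
    qed
  qed
qed

lemma slopes_within_Icc_int_segments:
  assumes "\<And>k. K1 \<le> k \<Longrightarrow> k < K2 \<Longrightarrow> slopes_within m M {of_int k..of_int k + 1} F"
  shows "slopes_within m M {of_int K1..of_int K2} F"
  using mono_on_Icc_int_segments[of K1 K2 "\<lambda>u. F u - m * u"]
    mono_on_Icc_int_segments[of K1 K2 "\<lambda>u. M * u - F u"] assms
  unfolding slopes_within_iff_mono_on by simp

definition lin_interp :: "(int \<Rightarrow> real) \<Rightarrow> real \<Rightarrow> real" where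
  "lin_interp y u = y \<lfloor>u\<rfloor> + (u - of_int \<lfloor>u\<rfloor>) * (y (\<lfloor>u\<rfloor> + 1) - y \<lfloor>u\<rfloor>)"

lemma lin_interp_on_segment:
  assumes "of_int k \<le> u" "u \<le> of_int k + 1"
  shows "lin_interp y u = y k + (u - of_int k) * (y (k + 1) - y k)"
proof (cases "u = of_int k + 1")
  case True
  then have "\<lfloor>u\<rfloor> = k + 1" by simp
  with True show ?thesis unfolding lin_interp_def by (simp add: algebra_simps)
next
  case False
  with assms have "\<lfloor>u\<rfloor> = k" by (simp add: floor_eq_iff)
  then show ?thesis unfolding lin_interp_def by simp
qed

lemma lin_interp_between:
  assumes "of_int k \<le> u" "u \<le> of_int k + 1" "y k \<le> y (k + 1)"
  shows "y k \<le> lin_interp y u" "lin_interp y u \<le> y (k + 1)"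
proof -
  have "0 \<le> (u - of_int k) * (y (k + 1) - y k)" using assms by simp
  moreover have "(u - of_int k) * (y (k + 1) - y k) \<le> 1 * (y (k + 1) - y k)"
    using assms by (intro mult_right_mono) auto
  ultimately show "y k \<le> lin_interp y u" "lin_interp y u \<le> y (k + 1)"
    using lin_interp_on_segment[OF assms(1,2), of y] by simp_all
qed

lemma lin_interp_slopes_within:
  assumes "\<And>k. K1 \<le> k \<Longrightarrow> k < K2 \<Longrightarrow> m \<le> y (k + 1) - y k \<and> y (k + 1) - y k \<le> M"
  shows "slopes_within m M {of_int K1..of_int K2} (lin_interp y)"
proof (rule slopes_within_Icc_int_segments)
  fix k assume k: "K1 \<le> k" "k < K2"
  show "slopes_within m M {of_int k..of_int k + 1} (lin_interp y)"
    unfolding slopes_within_def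
  proof (intro ballI impI)
    fix r s :: real assume r: "r \<in> {of_int k..of_int k + 1}" and s: "s \<in> {of_int k..of_int k + 1}"
      and "r \<le> s"
    have "lin_interp y s - lin_interp y r = (s - r) * (y (k + 1) - y k)"
      using lin_interp_on_segment[of k r y] lin_interp_on_segment[of k s y] r s
      by (simp add: algebra_simps)
    moreover have "(s - r) * m \<le> (s - r) * (y (k + 1) - y k)"
      "(s - r) * (y (k + 1) - y k) \<le> (s - r) * M"
      using assms[OF k] \<open>r \<le> s\<close> by (simp_all add: mult_left_mono)
    ultimately show "m * (s - r) \<le> lin_interp y s - lin_interp y r \<and>
      lin_interp y s - lin_interp y r \<le> M * (s - r)" by (simp add: mult.commute)
  qed
qed

section \<open>Gain operators\<close>

locale gain_op =
  fixes Ii :: "'i \<Rightarrow> 'i set"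
    and gam :: "'i \<Rightarrow> 'i \<Rightarrow> real \<Rightarrow> real"
    and mu :: "'i \<Rightarrow> ('i \<Rightarrow> real) \<Rightarrow> ereal"
  assumes gain: "gain_operator Ii gam mu"
begin

lemma finite_Ii: "finite (Ii i)"
  using gain unfolding gain_operator_def by (elim conjE) simp

lemma gam_class_K: "j \<in> Ii i \<Longrightarrow> class_K (gam i j)"
  using gain unfolding gain_operator_def by (elim conjE) (simp add: class_Kinf_imp_class_K)

lemma gam_equicontinuous:
  "0 \<le> r0 \<Longrightarrow> 0 < \<epsilon> \<Longrightarrow>
     \<exists>\<delta>>0. \<forall>i. \<forall>j\<in>Ii i. \<forall>r\<ge>0. \<bar>r - r0\<bar> \<le> \<delta> \<longrightarrow> \<bar>gam i j r - gam i j r0\<bar> \<le> \<epsilon>"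
  using gain unfolding gain_operator_def by (elim conjE) simp

lemma mu_zero: "mu i (\<lambda>_. 0) = 0"
  using gain unfolding gain_operator_def by (elim conjE exE) simp

lemma mu_lower_bound:
  obtains \<xi> where "class_Kinf \<xi>" "\<And>i s. s \<in> linf_pos \<Longrightarrow> ereal (\<xi> (supnorm s)) \<le> mu i s"
  using gain unfolding gain_operator_def by (elim conjE exE) (auto intro: that)

lemma mu_mono: "s1 \<in> linf_pos \<Longrightarrow> s2 \<in> linf_pos \<Longrightarrow> s1 \<le> s2 \<Longrightarrow> mu i s1 \<le> mu i s2"
  using gain unfolding gain_operator_def by (elim conjE) simp

lemma mu_finite:
  assumes "finite J" "s \<in> linf_pos" "\<And>k. k \<notin> J \<Longrightarrow> s k = 0"
  shows "\<bar>mu i s\<bar> \<noteq> \<infinity>"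
proof -
  have "\<forall>s\<in>{s \<in> linf_pos. \<forall>k. k \<notin> J \<longrightarrow> s k = 0}. \<bar>mu i s\<bar> \<noteq> \<infinity>"
    using gain assms(1) unfolding gain_operator_def by (elim conjE) simp
  moreover have "s \<in> {s \<in> linf_pos. \<forall>k. k \<notin> J \<longrightarrow> s k = 0}" using assms(2,3) by simp
  ultimately show ?thesis by (rule bspec)
qed

lemma mu_uniformly_continuous:
  "A \<subseteq> linf_pos \<Longrightarrow> bdd_above (supnorm ` A) \<Longrightarrow> 0 < \<epsilon> \<Longrightarrow>
     \<exists>\<delta>>0. \<forall>s0\<in>A. \<forall>s\<in>linf_pos. supnorm (s - s0) \<le> \<delta> \<longrightarrow>
       (\<forall>i. \<bar>mu i (restr s (Ii i)) - mu i (restr s0 (Ii i))\<bar> \<le> ereal \<epsilon>)"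
  using gain unfolding gain_operator_def by (elim conjE) simp

lemma Gain_linf_pos: "s \<in> linf_pos \<Longrightarrow> Gain Ii gam mu s \<in> linf_pos"
  using gain unfolding gain_operator_def by (elim conjE) simp

definition gain_arg :: "'i \<Rightarrow> ('i \<Rightarrow> real) \<Rightarrow> 'i \<Rightarrow> real" where
  "gain_arg i s = (\<lambda>j. if j \<in> Ii i then gam i j (s j) else 0)"

lemma gain_arg_nonneg: "(\<And>j. 0 \<le> s j) \<Longrightarrow> 0 \<le> gain_arg i s j"
  unfolding gain_arg_def using class_K_nonneg[OF gam_class_K] by auto

lemma gain_arg_linf_pos:
  assumes "\<And>j. 0 \<le> s j"
  shows "gain_arg i s \<in> linf_pos"
proof (rule linf_posI)
  show "0 \<le> gain_arg i s j" for j by (rule gain_arg_nonneg[OF assms])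
  have "finite ((\<lambda>j. gam i j (s j)) ` Ii i)" using finite_Ii by simp
  then show "gain_arg i s j \<le> Max (insert 0 ((\<lambda>j. gam i j (s j)) ` Ii i))" for j
    unfolding gain_arg_def by auto
qed

lemma restr_gain_arg: "restr (gain_arg i s) (Ii i) = gain_arg i s"
  unfolding restr_def gain_arg_def by auto

lemma gain_arg_mono: "(\<And>j. 0 \<le> s1 j) \<Longrightarrow> (\<And>j. s1 j \<le> s2 j) \<Longrightarrow> gain_arg i s1 \<le> gain_arg i s2"
  unfolding gain_arg_def le_fun_def using class_K_mono[OF gam_class_K] by auto

lemma ereal_Gain:
  assumes "\<And>j. 0 \<le> s j"
  shows "ereal (Gain Ii gam mu s i) = mu i (gain_arg i s)"
proof -
  have "\<bar>mu i (gain_arg i s)\<bar> \<noteq> \<infinity>"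
    by (rule mu_finite[OF finite_Ii[of i] gain_arg_linf_pos[OF assms]]) (simp add: gain_arg_def)
  then show ?thesis unfolding Gain_def gain_arg_def[symmetric] by (simp add: ereal_real)
qed

lemma Gain_zero: "Gain Ii gam mu (\<lambda>_. 0) i = 0"
proof -
  have "gain_arg i (\<lambda>_. 0) = (\<lambda>_. 0)"
    unfolding gain_arg_def using class_K_zero[OF gam_class_K] by auto
  then show ?thesis using ereal_Gain[of "\<lambda>_. 0" i] mu_zero by simp
qed

lemma Gain_mono:
  assumes "\<And>j. 0 \<le> s1 j" "\<And>j. s1 j \<le> s2 j"
  shows "Gain Ii gam mu s1 i \<le> Gain Ii gam mu s2 i"
proof -
  have s2: "0 \<le> s2 j" for j using assms(1)[of j] assms(2)[of j] by linarith
  have "mu i (gain_arg i s1) \<le> mu i (gain_arg i s2)"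
    by (rule mu_mono[OF gain_arg_linf_pos[OF assms(1)] gain_arg_linf_pos[OF s2] gain_arg_mono[OF assms]])
  then have "ereal (Gain Ii gam mu s1 i) \<le> ereal (Gain Ii gam mu s2 i)"
    using ereal_Gain[of s1 i] ereal_Gain[of s2 i] assms(1) s2 by simp
  then show ?thesis by simp
qed

lemma Gain_nonneg: "(\<And>j. 0 \<le> s j) \<Longrightarrow> 0 \<le> Gain Ii gam mu s i"
  using Gain_mono[of "\<lambda>_. 0" s i] Gain_zero by simp

lemma gain_arg_bounded:
  assumes "0 \<le> R"
  obtains C where "\<And>i s. (\<And>j. 0 \<le> s j) \<Longrightarrow> (\<And>j. s j \<le> R) \<Longrightarrow> supnorm (gain_arg i s) \<le> C"
proof -
  obtain \<xi> where \<xi>: "class_Kinf \<xi>" "\<And>i s. s \<in> linf_pos \<Longrightarrow> ereal (\<xi> (supnorm s)) \<le> mu i s"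
    using mu_lower_bound by blast
  have "Gain Ii gam mu (\<lambda>_. R) \<in> linf_pos"
    by (rule Gain_linf_pos, rule linf_posI) (use assms in auto)
  then obtain G where G: "\<And>i. Gain Ii gam mu (\<lambda>_. R) i \<le> G"
    unfolding linf_pos_def bdd_above_def by fastforce
  obtain C where C: "0 \<le> C" "\<And>x. C \<le> x \<Longrightarrow> G < \<xi> x"
    using class_Kinf_eventually_gt[OF \<xi>(1), where M=G] by blast
  show ?thesis
  proof (rule that)
    fix i :: 'i and s :: "'i \<Rightarrow> real" assume s: "\<And>j. 0 \<le> s j" "\<And>j. s j \<le> R"
    have "ereal (\<xi> (supnorm (gain_arg i s))) \<le> ereal (Gain Ii gam mu s i)"
      using \<xi>(2)[OF gain_arg_linf_pos[OF s(1)]] ereal_Gain[OF s(1)] by simp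
    also have "\<dots> \<le> ereal G" using Gain_mono[of s "\<lambda>_. R" i] s G[of i] by simp
    finally have "\<xi> (supnorm (gain_arg i s)) \<le> G" by simp
    then show "supnorm (gain_arg i s) \<le> C" using C(2) by (meson linorder_not_le less_imp_le not_less)
  qed
qed

lemma gam_uniformly_equicontinuous:
  assumes "0 < \<epsilon>"
  obtains \<delta> where "0 < \<delta>"
    "\<And>i j r r'. j \<in> Ii i \<Longrightarrow> r \<in> {0..R} \<Longrightarrow> r' \<in> {0..R} \<Longrightarrow> \<bar>r' - r\<bar> < \<delta> \<Longrightarrow>
       \<bar>gam i j r' - gam i j r\<bar> < \<epsilon>"
proof -
  have equi: "\<exists>\<delta>>0. \<forall>f\<in>{gam i j |i j. j \<in> Ii i}. \<forall>r'\<in>{0..R}. dist r' r < \<delta> \<longrightarrow> dist (f r') (f r) < e"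
    if "r \<in> {0..R}" "0 < e" for r e
  proof -
    have "0 \<le> r" "0 < e/2" using that by auto
    then obtain \<delta> where \<delta>: "0 < \<delta>"
      "\<forall>i. \<forall>j\<in>Ii i. \<forall>r'\<ge>0. \<bar>r' - r\<bar> \<le> \<delta> \<longrightarrow> \<bar>gam i j r' - gam i j r\<bar> \<le> e/2"
      using gam_equicontinuous by blast
    show ?thesis
    proof (intro exI[of _ \<delta>] conjI ballI impI)
      fix f r' assume f: "f \<in> {gam i j |i j. j \<in> Ii i}" and r': "r' \<in> {0..R}" "dist r' r < \<delta>"
      from f obtain i j where "j \<in> Ii i" "f = gam i j" by blast
      with \<delta>(2) r' have "\<bar>f r' - f r\<bar> \<le> e/2" by (simp add: dist_real_def)
      with \<open>0 < e\<close> show "dist (f r') (f r) < e" by (simp add: dist_real_def)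
    qed (fact \<delta>(1))
  qed
  show ?thesis
  proof (rule compact_uniformly_equicontinuous[OF compact_Icc equi assms])
    fix \<delta> assume \<delta>: "0 < \<delta>" "\<And>f x x'. f \<in> {gam i j |i j. j \<in> Ii i} \<Longrightarrow> x \<in> {0..R} \<Longrightarrow>
      x' \<in> {0..R} \<Longrightarrow> dist x' x < \<delta> \<Longrightarrow> dist (f x') (f x) < \<epsilon>"
    show thesis
    proof (rule that[OF \<delta>(1)])
      fix i j r r' assume "j \<in> Ii i" "r \<in> {0..R}" "r' \<in> {0..R}" "\<bar>r' - r\<bar> < \<delta>"
      then show "\<bar>gam i j r' - gam i j r\<bar> < \<epsilon>"
        using \<delta>(2)[of "gam i j" r r'] by (auto simp: dist_real_def)
    qed
  qed
qed

lemma Gain_uniformly_continuous: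
  assumes "0 \<le> R" "0 < \<epsilon>"
  obtains \<delta> where "0 < \<delta>"
    "\<And>s s' i. (\<And>j. 0 \<le> s j \<and> s j \<le> R) \<Longrightarrow> (\<And>j. 0 \<le> s' j \<and> s' j \<le> R) \<Longrightarrow>
       (\<And>j. \<bar>s' j - s j\<bar> < \<delta>) \<Longrightarrow> \<bar>Gain Ii gam mu s' i - Gain Ii gam mu s i\<bar> \<le> \<epsilon>"
proof -
  define A where "A = {gain_arg i s |i s. \<forall>j. 0 \<le> s j \<and> s j \<le> R}"
  obtain C where C: "\<And>i s. (\<And>j. 0 \<le> s j) \<Longrightarrow> (\<And>j. s j \<le> R) \<Longrightarrow> supnorm (gain_arg i s) \<le> C"
    using gain_arg_bounded[OF assms(1)] by blast
  have "A \<subseteq> linf_pos" unfolding A_def using gain_arg_linf_pos by blast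
  moreover have "bdd_above (supnorm ` A)"
    unfolding A_def bdd_above_def using C by blast
  ultimately obtain \<delta>\<mu> where \<delta>\<mu>: "0 < \<delta>\<mu>" "\<forall>s0\<in>A. \<forall>s\<in>linf_pos. supnorm (s - s0) \<le> \<delta>\<mu> \<longrightarrow>
      (\<forall>i. \<bar>mu i (restr s (Ii i)) - mu i (restr s0 (Ii i))\<bar> \<le> ereal \<epsilon>)"
    using mu_uniformly_continuous assms(2) by blast
  obtain \<delta> where \<delta>: "0 < \<delta>" "\<And>i j r r'. j \<in> Ii i \<Longrightarrow> r \<in> {0..R} \<Longrightarrow> r' \<in> {0..R} \<Longrightarrow>
      \<bar>r' - r\<bar> < \<delta> \<Longrightarrow> \<bar>gam i j r' - gam i j r\<bar> < \<delta>\<mu>"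
    using gam_uniformly_equicontinuous[OF \<delta>\<mu>(1)] by blast
  show ?thesis
  proof (rule that[OF \<delta>(1)])
    fix s s' :: "'i \<Rightarrow> real" and i :: 'i
    assume s: "\<And>j. 0 \<le> s j \<and> s j \<le> R" and s': "\<And>j. 0 \<le> s' j \<and> s' j \<le> R"
      and close: "\<And>j. \<bar>s' j - s j\<bar> < \<delta>"
    have "\<bar>gain_arg i s' j - gain_arg i s j\<bar> \<le> \<delta>\<mu>" for j
      using \<delta>(2)[of j i "s j" "s' j"] s[of j] s'[of j] close[of j] \<delta>\<mu>(1)
      by (auto simp: gain_arg_def)
    then have "supnorm (gain_arg i s' - gain_arg i s) \<le> \<delta>\<mu>" by (intro supnorm_le) simp
    moreover have "gain_arg i s \<in> A" unfolding A_def using s by blast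
    moreover have "gain_arg i s' \<in> linf_pos" using gain_arg_linf_pos s' by blast
    ultimately have "\<bar>mu i (restr (gain_arg i s') (Ii i)) - mu i (restr (gain_arg i s) (Ii i))\<bar> \<le> ereal \<epsilon>"
      using \<delta>\<mu>(2) by blast
    then have "\<bar>mu i (gain_arg i s') - mu i (gain_arg i s)\<bar> \<le> ereal \<epsilon>"
      unfolding restr_gain_arg .
    then have "\<bar>ereal (Gain Ii gam mu s' i) - ereal (Gain Ii gam mu s i)\<bar> \<le> ereal \<epsilon>"
      using ereal_Gain[of s i] ereal_Gain[of s' i] s s' by simp
    then show "\<bar>Gain Ii gam mu s' i - Gain Ii gam mu s i\<bar> \<le> \<epsilon>" by simp
  qed
qed

end

section \<open>Lowering a path of decay to a path of strict decay\<close>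

locale decay_path_setting = gain_op Ii gam mu
  for Ii :: "'i \<Rightarrow> 'i set"
    and gam :: "'i \<Rightarrow> 'i \<Rightarrow> real \<Rightarrow> real"
    and mu :: "'i \<Rightarrow> ('i \<Rightarrow> real) \<Rightarrow> ereal" +
  fixes \<sigma> :: "real \<Rightarrow> 'i \<Rightarrow> real"
    and \<rho> \<phi>min \<phi>max :: "real \<Rightarrow> real"
  assumes sigma_linf: "\<forall>r\<ge>0. \<sigma> r \<in> linf_pos"
    and cont: "\<forall>r0\<ge>0. \<forall>\<epsilon>>0. \<exists>\<delta>>0. \<forall>r\<ge>0. \<bar>r - r0\<bar> < \<delta> \<longrightarrow> supnorm (\<sigma> r - \<sigma> r0) < \<epsilon>"
    and incr: "\<forall>r1 r2. 0 \<le> r1 \<longrightarrow> r1 \<le> r2 \<longrightarrow> \<sigma> r1 \<le> \<sigma> r2"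
    and rho: "class_Kinf \<rho>"
    and decay: "\<forall>r\<ge>0. Gain_rho Ii gam mu \<rho> (\<sigma> r) \<le> \<sigma> r"
    and phi_min: "class_Kinf \<phi>min"
    and phi_max: "class_Kinf \<phi>max"
    and bounds: "\<forall>r\<ge>0. (\<lambda>_. \<phi>min r) \<le> \<sigma> r \<and> \<sigma> r \<le> (\<lambda>_. \<phi>max r)"
begin

lemmas rho_K = class_Kinf_imp_class_K[OF rho]
  and phi_min_K = class_Kinf_imp_class_K[OF phi_min]
  and phi_max_K = class_Kinf_imp_class_K[OF phi_max]

lemma sigma_nonneg: "0 \<le> r \<Longrightarrow> 0 \<le> \<sigma> r i"
  by (rule linf_pos_nonneg) (use sigma_linf in simp)

lemma phi_min_le_sigma: "0 \<le> r \<Longrightarrow> \<phi>min r \<le> \<sigma> r i"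
  using bounds by (auto simp: le_fun_def)

lemma sigma_le_phi_max: "0 \<le> r \<Longrightarrow> \<sigma> r i \<le> \<phi>max r"
  using bounds by (auto simp: le_fun_def)

lemma sigma_mono: "0 \<le> r \<Longrightarrow> r \<le> r' \<Longrightarrow> \<sigma> r i \<le> \<sigma> r' i"
  using incr by (auto simp: le_fun_def)

lemma Gain_sigma_decay: "0 \<le> r \<Longrightarrow> Gain Ii gam mu (\<sigma> r) i + \<rho> (Gain Ii gam mu (\<sigma> r) i) \<le> \<sigma> r i"
  using decay unfolding Gain_rho_def le_fun_def by auto

lemma Gain_sigma_nonneg: "0 \<le> r \<Longrightarrow> 0 \<le> Gain Ii gam mu (\<sigma> r) i"
  by (simp add: Gain_nonneg sigma_nonneg)

lemma Gain_sigma_le: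
  assumes "0 \<le> r"
  shows "Gain Ii gam mu (\<sigma> r) i \<le> \<sigma> r i"
  using Gain_sigma_decay[OF assms, of i] class_K_nonneg[OF rho_K Gain_sigma_nonneg[OF assms, of i]]
  by linarith

abbreviation Gain_half :: "('i \<Rightarrow> real) \<Rightarrow> 'i \<Rightarrow> real" where
  "Gain_half \<equiv> Gain_rho Ii gam mu (\<lambda>x. \<rho> x / 2)"

lemma Gain_half_mono:
  assumes "\<And>j. 0 \<le> s1 j" "\<And>j. s1 j \<le> s2 j"
  shows "Gain_half s1 i \<le> Gain_half s2 i"
proof -
  have "Gain Ii gam mu s1 i \<le> Gain Ii gam mu s2 i" by (rule Gain_mono[of s1 s2 i, OF assms])
  moreover have "\<rho> (Gain Ii gam mu s1 i) \<le> \<rho> (Gain Ii gam mu s2 i)"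
    using class_K_mono[OF rho_K Gain_nonneg[of s1 i, OF assms(1)] calculation] .
  ultimately show ?thesis unfolding Gain_rho_def by simp
qed

lemma Gain_half_zero: "Gain_half (\<lambda>_. 0) i = 0"
  unfolding Gain_rho_def Gain_zero using class_K_zero[OF rho_K] by simp

text \<open>Halving \<rho> frees the margin \<sigma>_i(t) - \<Gamma>_i - \<rho>(\<Gamma>_i)/2 \<ge> \<rho>(\<Gamma>_i)/2, where
  \<Gamma>_i = Gamma_i(\<sigma>(t)). It is at least \<rho>(\<phi>min(t)/4)/2 if \<Gamma>_i \<ge> \<phi>min(t)/4, and at least
  \<phi>min(t)/4 otherwise because \<sigma>_i(t) \<ge> \<phi>min(t); slack t is half the smaller bound.\<close>
definition slack :: "real \<Rightarrow> real" where
  "slack t = min (\<rho> (\<phi>min t / 4) / 2) (\<phi>min t / 4) / 2"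

lemma slack_class_Kinf: "class_Kinf slack"
proof -
  have quarter: "class_Kinf (\<lambda>t. \<phi>min t / 4)"
    using class_Kinf_cmult[OF phi_min, of "1/4"] by simp
  have "class_Kinf (\<lambda>t. \<rho> (\<phi>min t / 4) / 2)"
    using class_Kinf_cmult[OF class_Kinf_comp[OF rho quarter], of "1/2"] by simp
  from class_Kinf_cmult[OF class_Kinf_min[OF this quarter], of "1/2"] show ?thesis
    unfolding slack_def by simp
qed

lemmas slack_K = class_Kinf_imp_class_K[OF slack_class_Kinf]

lemma slack_le: "slack t \<le> \<phi>min t / 8"
  unfolding slack_def by simp

lemma Gain_half_sigma_le:
  assumes "0 \<le> t"
  shows "Gain_half (\<sigma> t) i \<le> \<sigma> t i - 2 * slack t"
proof -
  define g where "g = Gain Ii gam mu (\<sigma> t) i"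
  have g: "0 \<le> g" "g + \<rho> g \<le> \<sigma> t i"
    unfolding g_def using Gain_sigma_nonneg[OF assms] Gain_sigma_decay[OF assms] by auto
  have "min (\<rho> (\<phi>min t / 4) / 2) (\<phi>min t / 4) \<le> \<sigma> t i - g - \<rho> g / 2"
  proof (cases "\<phi>min t / 4 \<le> g")
    case True
    then have "\<rho> (\<phi>min t / 4) \<le> \<rho> g"
      using class_K_mono[OF rho_K] class_K_nonneg[OF phi_min_K assms] by simp
    with g show ?thesis by linarith
  next
    case False
    with g phi_min_le_sigma[OF assms, of i] show ?thesis by linarith
  qed
  then show ?thesis unfolding Gain_rho_def slack_def g_def[symmetric] by linarith
qed

lemma sigma_uniformly_continuous:
  assumes "0 < \<epsilon>"
  obtains \<delta> where "0 < \<delta>"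
    "\<And>x x' j. x \<in> {0..B} \<Longrightarrow> x' \<in> {0..B} \<Longrightarrow> \<bar>x' - x\<bar> < \<delta> \<Longrightarrow> \<bar>\<sigma> x' j - \<sigma> x j\<bar> < \<epsilon>"
proof -
  have equi: "\<exists>\<delta>>0. \<forall>f\<in>range (\<lambda>j r. \<sigma> r j). \<forall>x'\<in>{0..B}. dist x' x < \<delta> \<longrightarrow> dist (f x') (f x) < e"
    if x: "x \<in> {0..B}" and e: "0 < e" for x e
  proof -
    obtain \<delta> where \<delta>: "0 < \<delta>" "\<forall>r\<ge>0. \<bar>r - x\<bar> < \<delta> \<longrightarrow> supnorm (\<sigma> r - \<sigma> x) < e"
      using cont[rule_format, of x e] x e by auto
    show ?thesis
    proof (intro exI[of _ \<delta>] conjI ballI impI)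
      fix f x' assume "f \<in> range (\<lambda>j r. \<sigma> r j)" "x' \<in> {0..B}" "dist x' x < \<delta>"
      moreover from this obtain j where "f = (\<lambda>r. \<sigma> r j)" by blast
      moreover have "\<bar>\<sigma> x' j - \<sigma> x j\<bar> \<le> supnorm (\<sigma> x' - \<sigma> x)"
        by (rule abs_diff_le_supnorm) (use sigma_linf x \<open>x' \<in> {0..B}\<close> in auto)
      ultimately show "dist (f x') (f x) < e" using \<delta>(2) by (force simp: dist_real_def)
    qed (fact \<delta>(1))
  qed
  show ?thesis
  proof (rule compact_uniformly_equicontinuous[OF compact_Icc equi assms])
    fix \<delta> assume \<delta>: "0 < \<delta>" "\<And>f x x'. f \<in> range (\<lambda>j r. \<sigma> r j) \<Longrightarrow> x \<in> {0..B} \<Longrightarrow>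
      x' \<in> {0..B} \<Longrightarrow> dist x' x < \<delta> \<Longrightarrow> dist (f x') (f x) < \<epsilon>"
    show thesis
    proof (rule that[OF \<delta>(1)])
      fix x x' j assume "x \<in> {0..B}" "x' \<in> {0..B}" "\<bar>x' - x\<bar> < \<delta>"
      then show "\<bar>\<sigma> x' j - \<sigma> x j\<bar> < \<epsilon>"
        using \<delta>(2)[of "\<lambda>r. \<sigma> r j" x x'] by (auto simp: dist_real_def)
    qed
  qed
qed

lemma Gain_sigma_uniformly_continuous:
  assumes "0 \<le> B" "0 < \<eta>"
  obtains h where "0 < h" "\<And>x x' i. x \<in> {0..B} \<Longrightarrow> x' \<in> {0..B} \<Longrightarrow> \<bar>x' - x\<bar> < h \<Longrightarrow>
    \<bar>Gain Ii gam mu (\<sigma> x') i - Gain Ii gam mu (\<sigma> x) i\<bar> \<le> \<eta>"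
proof -
  define R where "R = \<phi>max B"
  have in_R: "0 \<le> \<sigma> x j \<and> \<sigma> x j \<le> R" if "x \<in> {0..B}" for x j
  proof -
    have "\<sigma> x j \<le> \<phi>max x" using sigma_le_phi_max that by simp
    also have "\<dots> \<le> R" unfolding R_def using class_K_mono[OF phi_max_K] that by simp
    finally show ?thesis using sigma_nonneg that by simp
  qed
  have "0 \<le> R" using in_R[of 0 undefined] assms(1) by simp
  obtain \<delta>\<Gamma> where \<delta>\<Gamma>: "0 < \<delta>\<Gamma>" "\<And>s s' i. (\<And>j. 0 \<le> s j \<and> s j \<le> R) \<Longrightarrow>
      (\<And>j. 0 \<le> s' j \<and> s' j \<le> R) \<Longrightarrow> (\<And>j. \<bar>s' j - s j\<bar> < \<delta>\<Gamma>) \<Longrightarrow>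
      \<bar>Gain Ii gam mu s' i - Gain Ii gam mu s i\<bar> \<le> \<eta>"
    using Gain_uniformly_continuous[OF \<open>0 \<le> R\<close> assms(2)] by blast
  obtain h where "0 < h" "\<And>x x' j. x \<in> {0..B} \<Longrightarrow> x' \<in> {0..B} \<Longrightarrow>
      \<bar>x' - x\<bar> < h \<Longrightarrow> \<bar>\<sigma> x' j - \<sigma> x j\<bar> < \<delta>\<Gamma>"
    using sigma_uniformly_continuous[OF \<delta>\<Gamma>(1)] by blast
  with in_R show ?thesis by (intro that[of h] \<delta>\<Gamma>(2)) auto
qed

lemma Gain_half_sigma_continuous:
  assumes "0 \<le> B" "0 < \<eta>"
  obtains h where "0 < h"
    "\<And>x x' i. x \<in> {0..B} \<Longrightarrow> x \<le> x' \<Longrightarrow> x' \<le> x + h \<Longrightarrow> Gain_half (\<sigma> x') i \<le> Gain_half (\<sigma> x) i + \<eta>"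
proof -
  define R where "R = \<phi>max (B + 1)"
  have Gain_in_R: "Gain Ii gam mu (\<sigma> x) i \<in> {0..R}" if "x \<in> {0..B + 1}" for x i
  proof -
    have "Gain Ii gam mu (\<sigma> x) i \<le> \<phi>max x"
      using Gain_sigma_le[of x i] sigma_le_phi_max[of x i] that by simp
    also have "\<dots> \<le> R" unfolding R_def using class_K_mono[OF phi_max_K] that by simp
    finally show ?thesis using Gain_sigma_nonneg that by simp
  qed
  have "uniformly_continuous_on {0..R} \<rho>"
    using class_K_continuous_on[OF rho_K]
    by (intro compact_uniformly_continuous) (auto intro: continuous_on_subset)
  then obtain d\<rho> where d\<rho>: "0 < d\<rho>"
    "\<forall>g\<in>{0..R}. \<forall>g'\<in>{0..R}. dist g' g < d\<rho> \<longrightarrow> dist (\<rho> g') (\<rho> g) < \<eta>"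
    unfolding uniformly_continuous_on_def using assms(2) by blast
  define \<eta>' where "\<eta>' = min (\<eta>/2) (d\<rho>/2)"
  have \<eta>': "0 < \<eta>'" "\<eta>' \<le> \<eta>/2" "\<eta>' < d\<rho>" unfolding \<eta>'_def using assms(2) d\<rho>(1) by auto
  obtain h where h: "0 < h" "\<And>x x' i. x \<in> {0..B + 1} \<Longrightarrow> x' \<in> {0..B + 1} \<Longrightarrow> \<bar>x' - x\<bar> < h \<Longrightarrow>
      \<bar>Gain Ii gam mu (\<sigma> x') i - Gain Ii gam mu (\<sigma> x) i\<bar> \<le> \<eta>'"
    using Gain_sigma_uniformly_continuous[of "B + 1" \<eta>'] assms(1) \<eta>'(1) by auto
  show ?thesis
  proof (rule that[of "min (h/2) 1"])
    show "0 < min (h/2) 1" using h(1) by simp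
    fix x x' i assume "x \<in> {0..B}" "x \<le> x'" "x' \<le> x + min (h/2) 1"
    then have x: "x \<in> {0..B + 1}" "x' \<in> {0..B + 1}" "\<bar>x' - x\<bar> < h" using h(1) by auto
    define g g' where "g = Gain Ii gam mu (\<sigma> x) i" and "g' = Gain Ii gam mu (\<sigma> x') i"
    have "\<bar>g' - g\<bar> \<le> \<eta>'" unfolding g_def g'_def using h(2)[OF x] .
    moreover have "\<bar>\<rho> g' - \<rho> g\<bar> < \<eta>"
      using d\<rho>(2) Gain_in_R[OF x(1), of i] Gain_in_R[OF x(2), of i] calculation \<eta>'(3)
      unfolding g_def g'_def by (auto simp: dist_real_def)
    ultimately show "Gain_half (\<sigma> x') i \<le> Gain_half (\<sigma> x) i + \<eta>"
      using \<eta>'(2) unfolding Gain_rho_def g_def[symmetric] g'_def[symmetric] by linarith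
  qed
qed

definition admissible_step :: "real \<Rightarrow> real \<Rightarrow> bool" where
  "admissible_step t t' \<longleftrightarrow> (\<forall>i. Gain_half (\<sigma> t') i \<le> \<sigma> t i - slack t)"

lemma admissible_steps_uniform:
  assumes "0 < \<alpha>" "\<alpha> \<le> \<beta>"
  obtains h where "0 < h" "\<And>t t'. t \<in> {\<alpha>..\<beta>} \<Longrightarrow> t \<le> t' \<Longrightarrow> t' \<le> t + h \<Longrightarrow> admissible_step t t'"
proof -
  obtain h where h: "0 < h" "\<And>x x' i. x \<in> {0..\<beta>} \<Longrightarrow> x \<le> x' \<Longrightarrow> x' \<le> x + h \<Longrightarrow>
      Gain_half (\<sigma> x') i \<le> Gain_half (\<sigma> x) i + slack \<alpha>"
    using Gain_half_sigma_continuous[of \<beta> "slack \<alpha>"] class_K_pos[OF slack_K assms(1)] assms by auto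
  show ?thesis
  proof (rule that[OF h(1)])
    fix t t' assume t: "t \<in> {\<alpha>..\<beta>}" "t \<le> t'" "t' \<le> t + h"
    have "slack \<alpha> \<le> slack t" using class_K_mono[OF slack_K] assms t(1) by simp
    show "admissible_step t t'"
      unfolding admissible_step_def
    proof
      fix i
      have "Gain_half (\<sigma> t') i \<le> Gain_half (\<sigma> t) i + slack \<alpha>" using h(2) t assms by auto
      also have "\<dots> \<le> \<sigma> t i - 2 * slack t + slack \<alpha>" using Gain_half_sigma_le[of t i] t assms by auto
      finally show "Gain_half (\<sigma> t') i \<le> \<sigma> t i - slack t" using \<open>slack \<alpha> \<le> slack t\<close> by linarith
    qed
  qed
qed

text \<open>The path is lowered at u by lowering u. This keeps \<sigma> u - lowering u above \<sigma> t - slack t for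
  all t \<le> u, so the infimum over u \<ge> t below is nondecreasing in t and still within slack t of
  \<sigma> t; adding lift, which is strictly increasing and below lowering, makes the nodes grow at
  a rate independent of the component.\<close>
definition lowering :: "real \<Rightarrow> real" where
  "lowering u = (INF s\<in>{0..u}. slack s + max 0 (\<phi>min u - \<phi>max s))"

definition lift :: "real \<Rightarrow> real" where
  "lift u = lowering u * (u / (1 + u))"

definition sigma_low :: "real \<Rightarrow> 'i \<Rightarrow> real" where
  "sigma_low t i = lift t + (INF u\<in>{t..}. \<sigma> u i - lowering u)"

lemma slack_nonneg: "0 \<le> s \<Longrightarrow> 0 \<le> slack s"
  by (rule class_K_nonneg[OF slack_K])

lemma phi_min_le_phi_max: "0 \<le> u \<Longrightarrow> \<phi>min u \<le> \<phi>max u"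
  using phi_min_le_sigma[of u undefined] sigma_le_phi_max[of u undefined] by linarith

lemma lowering_bdd_below: "bdd_below ((\<lambda>s. slack s + max 0 (\<phi>min u - \<phi>max s)) ` {0..u})"
  using slack_nonneg by (intro bdd_belowI[of _ 0]) fastforce

lemma lowering_nonneg: "0 \<le> u \<Longrightarrow> 0 \<le> lowering u"
  unfolding lowering_def using slack_nonneg by (intro cINF_greatest) fastforce+

lemma lowering_le: "0 \<le> s \<Longrightarrow> s \<le> u \<Longrightarrow> lowering u \<le> slack s + max 0 (\<phi>min u - \<phi>max s)"
  unfolding lowering_def by (rule cINF_lower[OF lowering_bdd_below]) simp

lemma lowering_le_slack: "0 \<le> u \<Longrightarrow> lowering u \<le> slack u"
  using lowering_le[of u u] phi_min_le_phi_max[of u] by simp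

lemma lowering_mono:
  assumes "0 \<le> u" "u \<le> u'"
  shows "lowering u \<le> lowering u'"
  unfolding lowering_def[of u']
proof (rule cINF_greatest)
  show "{0..u'} \<noteq> {}" using assms by simp
  fix s assume s: "s \<in> {0..u'}"
  show "lowering u \<le> slack s + max 0 (\<phi>min u' - \<phi>max s)"
  proof (cases "s \<le> u")
    case True
    with s have "lowering u \<le> slack s + max 0 (\<phi>min u - \<phi>max s)" by (simp add: lowering_le)
    moreover have "\<phi>min u \<le> \<phi>min u'" using class_K_mono[OF phi_min_K] assms by simp
    ultimately show ?thesis by linarith
  next
    case False
    with assms have "lowering u \<le> slack s"
      using lowering_le_slack[of u] class_K_mono[OF slack_K, of u s] by simp
    then show ?thesis by linarith
  qed
qed

lemma lowering_pos:
  assumes "0 < u"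
  shows "0 < lowering u"
proof -
  define y where "y = \<phi>min u"
  have "0 < y" unfolding y_def using class_K_pos[OF phi_min_K assms] .
  then obtain \<delta> where \<delta>: "0 < \<delta>" "\<And>x. 0 \<le> x \<Longrightarrow> x \<le> \<delta> \<Longrightarrow> \<phi>max x < y/2"
    using class_K_small[OF phi_max_K, of "y/2"] by auto
  have "min (y/2) (slack \<delta>) \<le> lowering u"
    unfolding lowering_def
  proof (rule cINF_greatest)
    show "{0..u} \<noteq> {}" using assms by simp
    fix s assume s: "s \<in> {0..u}"
    show "min (y/2) (slack \<delta>) \<le> slack s + max 0 (\<phi>min u - \<phi>max s)"
    proof (cases "s \<le> \<delta>")
      case True
      with \<delta>(2) s slack_nonneg[of s] show ?thesis unfolding y_def by force
    next
      case False
      then have "slack \<delta> \<le> slack s" using class_K_mono[OF slack_K, of \<delta> s] \<delta>(1) by simp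
      then show ?thesis by simp
    qed
  qed
  moreover have "0 < min (y/2) (slack \<delta>)" using \<open>0 < y\<close> class_K_pos[OF slack_K \<delta>(1)] by simp
  ultimately show ?thesis by linarith
qed

lemma lift_nonneg: "0 \<le> t \<Longrightarrow> 0 \<le> lift t"
  unfolding lift_def using lowering_nonneg by simp

lemma lift_le_lowering:
  assumes "0 \<le> t"
  shows "lift t \<le> lowering t"
proof -
  have "t / (1 + t) \<le> 1" using assms by simp
  then show ?thesis unfolding lift_def using lowering_nonneg[OF assms] mult_left_le by blast
qed

lemma lift_less:
  assumes "0 \<le> t" "t < t'"
  shows "lift t < lift t'"
proof -
  have "t / (1 + t) < t' / (1 + t')" using assms by (simp add: field_simps)
  moreover have "lowering t \<le> lowering t'" using lowering_mono assms by simp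
  moreover have "0 < lowering t'" using lowering_pos assms by simp
  moreover have "0 \<le> t / (1 + t)" using assms by simp
  ultimately show ?thesis
    unfolding lift_def by (meson mult_right_mono mult_strict_left_mono order_le_less_trans)
qed

lemma sigma_minus_slack_le:
  assumes "0 \<le> t" "t \<le> u"
  shows "\<sigma> t i - slack t \<le> \<sigma> u i - lowering u"
  using lowering_le[OF assms] sigma_mono[OF assms, of i] phi_min_le_sigma[of u i]
    sigma_le_phi_max[of t i] assms by linarith

lemma sigma_low_bdd_below: "0 \<le> t \<Longrightarrow> bdd_below ((\<lambda>u. \<sigma> u i - lowering u) ` {t..})"
  using sigma_minus_slack_le by (intro bdd_belowI[of _ "\<sigma> t i - slack t"]) fastforce

lemma sigma_low_ge:
  assumes "0 \<le> t"
  shows "\<sigma> t i - slack t \<le> sigma_low t i"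
proof -
  have "\<sigma> t i - slack t \<le> (INF u\<in>{t..}. \<sigma> u i - lowering u)"
    by (rule cINF_greatest) (use sigma_minus_slack_le assms in auto)
  then show ?thesis unfolding sigma_low_def using lift_nonneg[OF assms] by linarith
qed

lemma sigma_low_le: "0 \<le> t \<Longrightarrow> sigma_low t i \<le> \<sigma> t i"
  unfolding sigma_low_def
  using cINF_lower[OF sigma_low_bdd_below[of t i], of t] lift_le_lowering[of t] by simp

lemma sigma_low_increment:
  assumes "0 \<le> t" "t \<le> t'"
  shows "lift t' - lift t \<le> sigma_low t' i - sigma_low t i"
proof -
  have "(INF u\<in>{t..}. \<sigma> u i - lowering u) \<le> (INF u\<in>{t'..}. \<sigma> u i - lowering u)"
    by (rule cINF_superset_mono) (use sigma_low_bdd_below[OF assms(1)] assms in auto)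
  then show ?thesis unfolding sigma_low_def by linarith
qed

lemma phi_min_le_sigma_low: "0 \<le> t \<Longrightarrow> 7/8 * \<phi>min t \<le> sigma_low t i"
  using sigma_low_ge[of t i] phi_min_le_sigma[of t i] slack_le[of t] by linarith

lemma sigma_low_nonneg: "0 \<le> t \<Longrightarrow> 0 \<le> sigma_low t i"
  using phi_min_le_sigma_low[of t i] class_K_nonneg[OF phi_min_K, of t] by linarith

definition admissible_width :: "nat \<Rightarrow> real" where
  "admissible_width n = (SOME h. 0 < h \<and>
     (\<forall>t\<in>{1 / (real n + 1)..real n + 1}. \<forall>t'. t \<le> t' \<longrightarrow> t' \<le> t + h \<longrightarrow> admissible_step t t'))"

lemma admissible_width:
  "0 < admissible_width n"
  "t \<in> {1 / (real n + 1)..real n + 1} \<Longrightarrow> t \<le> t' \<Longrightarrow> t' \<le> t + admissible_width n \<Longrightarrow>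
     admissible_step t t'"
proof -
  have "1 / (real n + 1) \<le> real n + 1" by (simp add: field_simps)
  then obtain h where "0 < h"
    "\<And>t t'. t \<in> {1 / (real n + 1)..real n + 1} \<Longrightarrow> t \<le> t' \<Longrightarrow> t' \<le> t + h \<Longrightarrow> admissible_step t t'"
    using admissible_steps_uniform[of "1 / (real n + 1)" "real n + 1"] by auto
  then have "\<exists>h. 0 < h \<and>
     (\<forall>t\<in>{1 / (real n + 1)..real n + 1}. \<forall>t'. t \<le> t' \<longrightarrow> t' \<le> t + h \<longrightarrow> admissible_step t t')"
    by blast
  from someI_ex[OF this] show "0 < admissible_width n"
    "t \<in> {1 / (real n + 1)..real n + 1} \<Longrightarrow> t \<le> t' \<Longrightarrow> t' \<le> t + admissible_width n \<Longrightarrow>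
     admissible_step t t'"
    unfolding admissible_width_def by blast+
qed

definition width_index :: "real \<Rightarrow> nat" where
  "width_index t = nat \<lceil>t + 2 / t\<rceil>"

text \<open>The index is chosen so that [t/2, t + 1] lies in the interval of
  admissible_width (width_index t); this makes both t \<rightarrow> t + width t and t - width t \<rightarrow> t
  admissible steps.\<close>
definition width :: "real \<Rightarrow> real" where
  "width t = min (t / 2) (admissible_width (width_index t))"

lemma width_index_bounds:
  assumes "0 < t"
  shows "1 / (real (width_index t) + 1) \<le> t / 2" "t + 1 \<le> real (width_index t) + 1"
proof -
  have n: "t + 2 / t \<le> real (width_index t)" unfolding width_index_def by linarith
  moreover have "0 < 2 / t" using assms by simp
  ultimately have "2 / t \<le> real (width_index t) + 1" using assms by linarith
  then have "1 / (real (width_index t) + 1) \<le> 1 / (2 / t)"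
    using assms by (intro divide_left_mono) auto
  then show "1 / (real (width_index t) + 1) \<le> t / 2" by simp
  show "t + 1 \<le> real (width_index t) + 1" using n \<open>0 < 2 / t\<close> by linarith
qed

lemma width_pos: "0 < t \<Longrightarrow> 0 < width t"
  unfolding width_def using admissible_width(1) by simp

lemma width_le_half: "width t \<le> t / 2"
  unfolding width_def by simp

lemma admissible_step_forward: "0 < t \<Longrightarrow> admissible_step t (t + width t)"
  using width_index_bounds[of t] width_pos[of t] width_le_half[of t]
  by (intro admissible_width(2)[of t "width_index t"]) (auto simp: width_def)

lemma admissible_step_backward: "0 < t \<Longrightarrow> admissible_step (t - width t) t"
  using width_index_bounds[of t] width_pos[of t] width_le_half[of t]
  by (intro admissible_width(2)[of "t - width t" "width_index t"]) (auto simp: width_def)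

definition width_bound :: "nat \<Rightarrow> real" where
  "width_bound N = Min (admissible_width ` {..N})"

lemma width_bound_pos: "0 < width_bound N"
  unfolding width_bound_def using admissible_width(1) by (subst Min_gr_iff) auto

lemma width_ge:
  assumes "0 < \<epsilon>" "\<epsilon> \<le> t" "t \<le> B"
  shows "min (\<epsilon> / 2) (width_bound (nat \<lceil>B + 2 / \<epsilon>\<rceil>)) \<le> width t"
proof -
  have "2 / t \<le> 2 / \<epsilon>" using assms by (intro divide_left_mono) auto
  with assms have "width_index t \<le> nat \<lceil>B + 2 / \<epsilon>\<rceil>"
    unfolding width_index_def by (intro nat_mono ceiling_mono) linarith
  then have "width_bound (nat \<lceil>B + 2 / \<epsilon>\<rceil>) \<le> admissible_width (width_index t)"
    unfolding width_bound_def by (intro Min_le) auto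
  with assms show ?thesis unfolding width_def by auto
qed

primrec grid_up :: "nat \<Rightarrow> real" where
  "grid_up 0 = 1"
| "grid_up (Suc m) = grid_up m + width (grid_up m)"

primrec grid_down :: "nat \<Rightarrow> real" where
  "grid_down 0 = 1"
| "grid_down (Suc m) = grid_down m - width (grid_down m)"

lemma grid_up_ge_1: "1 \<le> grid_up m"
proof (induction m)
  case (Suc m)
  then show ?case using width_pos[of "grid_up m"] by simp
qed simp

lemma grid_down_bounds: "0 < grid_down m \<and> grid_down m \<le> 1"
proof (induction m)
  case (Suc m)
  then show ?case using width_pos[of "grid_down m"] width_le_half[of "grid_down m"] by simp
qed simp

lemma grid_up_unbounded: "\<exists>m. B < grid_up m"
proof (rule ccontr)
  assume "\<not> (\<exists>m. B < grid_up m)"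
  then have bounded: "grid_up m \<le> B" for m by (simp add: not_less)
  define c where "c = min (1/2) (width_bound (nat \<lceil>B + 2 / 1\<rceil>))"
  have "0 < c" unfolding c_def using width_bound_pos by simp
  have c: "c \<le> width (grid_up m)" for m
    unfolding c_def using width_ge[of 1 "grid_up m" B] grid_up_ge_1 bounded by simp
  have grows: "1 + real m * c \<le> grid_up m" for m
  proof (induction m)
    case (Suc m)
    then show ?case using c[of m] by (simp add: algebra_simps)
  qed simp
  obtain m where "B < real m * c" using reals_Archimedean3[OF \<open>0 < c\<close>] by blast
  with grows[of m] bounded[of m] show False by linarith
qed

lemma grid_down_small: "0 < \<epsilon> \<Longrightarrow> \<exists>m. grid_down m < \<epsilon>"
proof (rule ccontr)
  assume "0 < \<epsilon>" "\<not> (\<exists>m. grid_down m < \<epsilon>)"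
  then have bounded: "\<epsilon> \<le> grid_down m" for m by (simp add: not_less)
  define c where "c = min (\<epsilon>/2) (width_bound (nat \<lceil>1 + 2 / \<epsilon>\<rceil>))"
  have "0 < c" unfolding c_def using width_bound_pos \<open>0 < \<epsilon>\<close> by simp
  have c: "c \<le> width (grid_down m)" for m
    unfolding c_def using width_ge[of \<epsilon> "grid_down m" 1] grid_down_bounds \<open>0 < \<epsilon>\<close> bounded by simp
  have shrinks: "grid_down m \<le> 1 - real m * c" for m
  proof (induction m)
    case (Suc m)
    then show ?case using c[of m] by (simp add: algebra_simps)
  qed simp
  obtain m where "1 < real m * c" using reals_Archimedean3[OF \<open>0 < c\<close>] by blast
  with shrinks[of m] bounded[of m] \<open>0 < \<epsilon>\<close> show False by linarith
qed

definition grid :: "int \<Rightarrow> real" where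
  "grid k = (if 0 \<le> k then grid_up (nat k) else grid_down (nat (- k)))"

lemma grid_neg: "k \<le> 0 \<Longrightarrow> grid k = grid_down (nat (- k))"
  unfolding grid_def by (cases "k = 0") auto

lemma grid_pos: "0 < grid k"
proof (cases "0 \<le> k")
  case True
  then show ?thesis using grid_up_ge_1[of "nat k"] by (simp add: grid_def)
next
  case False
  then show ?thesis using grid_down_bounds[of "nat (- k)"] by (simp add: grid_def)
qed

lemma grid_nonneg: "0 \<le> grid k"
  using grid_pos[of k] by simp

lemma grid_succ: "0 \<le> k \<Longrightarrow> grid (k + 1) = grid k + width (grid k)"
  unfolding grid_def by (simp add: nat_add_distrib)

lemma grid_pred:
  assumes "k < 0"
  shows "grid k = grid (k + 1) - width (grid (k + 1))"
proof -
  define n where "n = nat (- (k + 1))"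
  have "nat (- k) = Suc n" using assms unfolding n_def by simp
  then have "grid k = grid_down (Suc n)" using grid_neg[of k] assms by simp
  moreover have "grid (k + 1) = grid_down n" using grid_neg[of "k + 1"] assms unfolding n_def by simp
  ultimately show ?thesis by simp
qed

lemma grid_admissible: "admissible_step (grid k) (grid (k + 1))"
proof (cases "0 \<le> k")
  case True
  then show ?thesis using grid_succ admissible_step_forward[OF grid_pos[of k]] by simp
next
  case False
  then show ?thesis using grid_pred admissible_step_backward[OF grid_pos[of "k + 1"]] by simp
qed

lemma grid_less_succ: "grid k < grid (k + 1)"
proof (cases "0 \<le> k")
  case True
  then show ?thesis using grid_succ width_pos[OF grid_pos[of k]] by simp
next
  case False
  then show ?thesis using grid_pred[of k] width_pos[OF grid_pos[of "k + 1"]] by simp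
qed

lemma grid_less: "k < k' \<Longrightarrow> grid k < grid k'"
proof (induction k' rule: int_gr_induct)
  case base
  then show ?case by (rule grid_less_succ)
next
  case (step i)
  then show ?case using grid_less_succ[of i] by linarith
qed

lemma grid_mono: "k \<le> k' \<Longrightarrow> grid k \<le> grid k'"
  using grid_less[of k k'] by (cases "k = k'") auto

lemma grid_unbounded: "\<exists>K. \<forall>k\<ge>K. B < grid k"
proof -
  obtain m where m: "B < grid_up m" using grid_up_unbounded by blast
  have "B < grid k" if "int m \<le> k" for k
  proof -
    have "grid (int m) = grid_up m" unfolding grid_def by simp
    with grid_mono[OF that] m show ?thesis by simp
  qed
  then show ?thesis by blast
qed

lemma grid_small:
  assumes "0 < \<epsilon>"
  shows "\<exists>K. \<forall>k\<le>K. grid k < \<epsilon>"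
proof -
  obtain m where m: "grid_down m < \<epsilon>" using grid_down_small[OF assms] by blast
  have "grid k < \<epsilon>" if "k \<le> - int m" for k
  proof -
    have "grid (- int m) \<le> grid_down m" unfolding grid_def by (cases "m = 0") auto
    with grid_mono[OF that] m show ?thesis by simp
  qed
  then show ?thesis by blast
qed

definition node :: "int \<Rightarrow> 'i \<Rightarrow> real" where
  "node k = sigma_low (grid k)"

text \<open>Interpolating in the variable r - 1/r, which maps (0, \<infinity>) increasingly onto the reals,
  makes the path start at 0 and traverse all nodes.\<close>
definition decay_path :: "real \<Rightarrow> 'i \<Rightarrow> real" where
  "decay_path r i = (if r \<le> 0 then 0 else lin_interp (\<lambda>k. node k i) (r - 1 / r))"

lemma node_nonneg: "0 \<le> node k i"
  unfolding node_def by (rule sigma_low_nonneg[OF grid_nonneg])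

lemma node_le_sigma: "node k i \<le> \<sigma> (grid k) i"
  unfolding node_def by (rule sigma_low_le[OF grid_nonneg])

lemma sigma_minus_slack_le_node: "\<sigma> (grid k) i - slack (grid k) \<le> node k i"
  unfolding node_def by (rule sigma_low_ge[OF grid_nonneg])

lemma node_le_phi_max: "node k i \<le> \<phi>max (grid k)"
  using node_le_sigma sigma_le_phi_max[OF grid_nonneg] by (rule order_trans)

lemma phi_min_le_node: "7/8 * \<phi>min (grid k) \<le> node k i"
  unfolding node_def by (rule phi_min_le_sigma_low[OF grid_nonneg])

lemma lift_grid_less: "lift (grid k) < lift (grid (k + 1))"
  using lift_less[OF grid_nonneg grid_less_succ] .

lemma node_increment: "lift (grid (k + 1)) - lift (grid k) \<le> node (k + 1) i - node k i"
  unfolding node_def using sigma_low_increment[OF grid_nonneg less_imp_le[OF grid_less_succ]] .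

lemma node_mono: "node k i \<le> node (k + 1) i"
  using node_increment[of k i] lift_grid_less[of k] by linarith

lemma decay_path_nonpos: "r \<le> 0 \<Longrightarrow> decay_path r = (\<lambda>_. 0)"
  unfolding decay_path_def by auto

lemma decay_path_between:
  assumes "0 < r"
  shows "node \<lfloor>r - 1 / r\<rfloor> i \<le> decay_path r i" "decay_path r i \<le> node (\<lfloor>r - 1 / r\<rfloor> + 1) i"
  using lin_interp_between[of "\<lfloor>r - 1 / r\<rfloor>" "r - 1 / r" "\<lambda>k. node k i"] node_mono assms
  unfolding decay_path_def by auto

lemma decay_path_nonneg: "0 \<le> decay_path r i"
  using decay_path_between(1)[of r i] node_nonneg[of "\<lfloor>r - 1 / r\<rfloor>" i] decay_path_nonpos[of r]
  by (cases "r \<le> 0") auto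

lemma decay_path_le: "0 < r \<Longrightarrow> decay_path r i \<le> \<phi>max (grid (\<lfloor>r - 1 / r\<rfloor> + 1))"
  using decay_path_between(2) node_le_phi_max by (rule order_trans)

lemma decay_path_linf_pos: "decay_path r \<in> linf_pos"
proof (cases "r \<le> 0")
  case True
  show ?thesis unfolding decay_path_nonpos[OF True] by (rule linf_posI) auto
next
  case False
  then show ?thesis using decay_path_le[of r] by (intro linf_posI[OF decay_path_nonneg]) auto
qed

lemma decay_path_decay: "Gain_half (decay_path r) i \<le> decay_path r i"
proof (cases "r \<le> 0")
  case True
  then show ?thesis using Gain_half_zero by (simp add: decay_path_nonpos)
next
  case False
  define k where "k = \<lfloor>r - 1 / r\<rfloor>"
  from False have r: "0 < r" by simp
  have "Gain_half (decay_path r) i \<le> Gain_half (node (k + 1)) i"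
    using decay_path_nonneg decay_path_between(2)[OF r] unfolding k_def by (intro Gain_half_mono)
  also have "\<dots> \<le> Gain_half (\<sigma> (grid (k + 1))) i"
    using node_nonneg node_le_sigma by (intro Gain_half_mono)
  also have "\<dots> \<le> \<sigma> (grid k) i - slack (grid k)"
    using grid_admissible[of k] unfolding admissible_step_def by blast
  also have "\<dots> \<le> node k i" by (rule sigma_minus_slack_le_node)
  also have "\<dots> \<le> decay_path r i" using decay_path_between(1)[OF r] unfolding k_def .
  finally show ?thesis .
qed

lemma node_increments_bounded:
  assumes "K1 < K2"
  obtains m M where "0 < m" "m \<le> M"
    "\<And>k i. K1 \<le> k \<Longrightarrow> k < K2 \<Longrightarrow> m \<le> node (k + 1) i - node k i \<and> node (k + 1) i - node k i \<le> M"
proof -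
  define incs where "incs = (\<lambda>k. lift (grid (k + 1)) - lift (grid k)) ` {K1..<K2}"
  define m M where "m = Min incs" and "M = \<phi>max (grid K2)"
  have "finite incs" "incs \<noteq> {}" unfolding incs_def using assms by auto
  then have "0 < m" unfolding m_def incs_def using lift_grid_less by (subst Min_gr_iff) auto
  have steps: "m \<le> node (k + 1) i - node k i \<and> node (k + 1) i - node k i \<le> M"
    if "K1 \<le> k" "k < K2" for k i
  proof
    have "m \<le> lift (grid (k + 1)) - lift (grid k)"
      unfolding m_def incs_def using that by (intro Min_le) auto
    then show "m \<le> node (k + 1) i - node k i" using node_increment[of k i] by linarith
    have "\<phi>max (grid (k + 1)) \<le> M"
      unfolding M_def using that by (intro class_K_mono[OF phi_max_K grid_nonneg grid_mono]) simp
    then show "node (k + 1) i - node k i \<le> M"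
      using node_le_phi_max[of "k + 1" i] node_nonneg[of k i] by linarith
  qed
  then have "m \<le> M" using assms by fastforce
  show ?thesis by (rule that[OF \<open>0 < m\<close> \<open>m \<le> M\<close> steps])
qed

lemma decay_path_uniformly_bilipschitz: "uniformly_locally_bilipschitz_incr decay_path"
  unfolding uniformly_locally_bilipschitz_incr_def
proof (intro allI impI)
  fix a b :: real assume ab: "0 < a" "a \<le> b"
  define K1 K2 where "K1 = \<lfloor>a - 1 / a\<rfloor>" and "K2 = \<lceil>b - 1 / b\<rceil> + 1"
  note param_slopes = slopes_within_diff_inverse[OF ab(1), of b]
  have "of_int K1 \<le> a - 1 / a" "b - 1 / b < of_int K2" unfolding K1_def K2_def by linarith+
  moreover have "a - 1 / a \<le> r - 1 / r \<and> r - 1 / r \<le> b - 1 / b" if "r \<in> {a..b}" for r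
    using slopes_withinD[OF param_slopes, of a r] slopes_withinD[OF param_slopes, of r b] that ab by auto
  ultimately have maps_to: "(\<lambda>r. r - 1 / r) ` {a..b} \<subseteq> {of_int K1..of_int K2}"
    and "K1 < K2" using ab by fastforce+
  then obtain m M where mM: "0 < m" "m \<le> M" "\<And>k i. K1 \<le> k \<Longrightarrow> k < K2 \<Longrightarrow>
      m \<le> node (k + 1) i - node k i \<and> node (k + 1) i - node k i \<le> M"
    using node_increments_bounded by blast
  have "slopes_within (m * 1) (M * (1 + 1 / a\<^sup>2)) {a..b} (\<lambda>r. decay_path r i)" for i
  proof -
    have "slopes_within (m * 1) (M * (1 + 1 / a\<^sup>2)) {a..b} (\<lambda>r. lin_interp (\<lambda>k. node k i) (r - 1 / r))"
      using param_slopes lin_interp_slopes_within[of K1 K2 m "\<lambda>k. node k i" M] maps_to mM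
      by (intro slopes_within_compose) auto
    then show ?thesis using ab(1) by (subst slopes_within_cong[of "{a..b}"]) (auto simp: decay_path_def)
  qed
  moreover have "m * 1 \<le> M * (1 + 1 / a\<^sup>2)"
  proof -
    have "0 \<le> M / a\<^sup>2" using mM(1,2) by simp
    with mM(2) show ?thesis by (simp add: distrib_left)
  qed
  ultimately show "\<exists>m M. 0 < m \<and> m \<le> M \<and> (\<forall>i. slopes_within m M {a..b} (\<lambda>r. decay_path r i))"
    using mM(1) by (intro exI[of _ "m * 1"] exI[of _ "M * (1 + 1 / a\<^sup>2)"]) auto
qed

lemma decay_path_small:
  assumes "0 < \<epsilon>"
  shows "\<exists>\<delta>>0. \<forall>i r. 0 < r \<longrightarrow> r \<le> \<delta> \<longrightarrow> decay_path r i \<le> \<epsilon>"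
proof -
  obtain \<delta>1 where \<delta>1: "0 < \<delta>1" "\<And>x. 0 \<le> x \<Longrightarrow> x \<le> \<delta>1 \<Longrightarrow> \<phi>max x < \<epsilon>"
    using class_K_small[OF phi_max_K assms] by blast
  obtain K where K: "\<forall>k\<le>K. grid k < \<delta>1" using grid_small[OF \<delta>1(1)] by blast
  define K' where "K' = min K 0"
  define \<delta> :: real where "\<delta> = 1 / (2 - of_int K')"
  have "of_int K' \<le> (0::real)" unfolding K'_def by simp
  then have "0 < \<delta>" "\<delta> \<le> 1" unfolding \<delta>_def by (simp_all add: field_simps)
  show ?thesis
  proof (intro exI[of _ \<delta>] conjI allI impI)
    fix i r assume r: "0 < r" "r \<le> \<delta>"
    then have "2 - of_int K' \<le> 1 / r" unfolding \<delta>_def using \<open>of_int K' \<le> 0\<close> by (simp add: field_simps)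
    with r \<open>\<delta> \<le> 1\<close> have "\<lfloor>r - 1 / r\<rfloor> + 1 \<le> K" unfolding K'_def by linarith
    then have "\<phi>max (grid (\<lfloor>r - 1 / r\<rfloor> + 1)) < \<epsilon>" using K \<delta>1(2) grid_nonneg less_imp_le by blast
    then show "decay_path r i \<le> \<epsilon>" using decay_path_le[OF r(1), of i] by linarith
  qed (fact \<open>0 < \<delta>\<close>)
qed

lemma decay_path_unbounded: "\<exists>r\<ge>0. \<forall>i. B < decay_path r i"
proof -
  obtain x0 where x0: "0 \<le> x0" "\<And>x. x0 \<le> x \<Longrightarrow> 8/7 * \<bar>B\<bar> < \<phi>min x"
    using class_Kinf_eventually_gt[OF phi_min, where M="8/7 * \<bar>B\<bar>"] by blast
  obtain K where K: "\<forall>k\<ge>K. x0 < grid k" using grid_unbounded by blast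
  define r :: real where "r = \<bar>of_int K\<bar> + 2"
  have "2 \<le> r" unfolding r_def by simp
  then have "1 / r \<le> 1" by simp
  moreover have "(of_int K :: real) \<le> \<bar>of_int K\<bar>" by simp
  ultimately have "of_int K \<le> r - 1 / r" using r_def by linarith
  then have "K \<le> \<lfloor>r - 1 / r\<rfloor>" by (simp add: le_floor_iff)
  then have "8/7 * \<bar>B\<bar> < \<phi>min (grid \<lfloor>r - 1 / r\<rfloor>)" using K x0(2) less_imp_le by blast
  then have "B < node \<lfloor>r - 1 / r\<rfloor> i" for i using phi_min_le_node[of "\<lfloor>r - 1 / r\<rfloor>" i] by linarith
  moreover have "node \<lfloor>r - 1 / r\<rfloor> i \<le> decay_path r i" for i
    using decay_path_between(1)[of r i] \<open>2 \<le> r\<close> by simp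
  ultimately have "B < decay_path r i" for i using order_less_le_trans by blast
  with \<open>2 \<le> r\<close> show ?thesis by (intro exI[of _ r]) auto
qed

lemma decay_path_class_Kinf: "class_Kinf (\<lambda>r. decay_path r i)"
proof (rule class_Kinf_if_locally_bilipschitz_incr)
  show "locally_bilipschitz_incr (\<lambda>r. decay_path r i)"
    by (rule uniformly_locally_bilipschitz_incrD[OF decay_path_uniformly_bilipschitz])
  show "decay_path 0 i = 0" by (simp add: decay_path_nonpos)
  show "0 \<le> decay_path r i" for r by (rule decay_path_nonneg)
  show "\<exists>\<delta>>0. \<forall>r. 0 < r \<longrightarrow> r \<le> \<delta> \<longrightarrow> decay_path r i \<le> \<epsilon>" if "0 < \<epsilon>" for \<epsilon>
    using decay_path_small[OF that] by blast
  show "\<exists>r\<ge>0. B < decay_path r i" for B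
    using decay_path_unbounded[of B] by blast
qed

lemma decay_path_bdd_above: "bdd_above (range (decay_path r))"
proof (cases "r \<le> 0")
  case False
  then show ?thesis using decay_path_le[of r] by (intro bdd_aboveI2) auto
qed (simp add: decay_path_nonpos)

lemma decay_path_bdd_below: "bdd_below (range (decay_path r))"
  using decay_path_nonneg by (intro bdd_belowI2)

lemma decay_path_INF_class_Kinf: "class_Kinf (\<lambda>r. INF i. decay_path r i)"
proof (rule class_Kinf_if_locally_bilipschitz_incr)
  show "locally_bilipschitz_incr (\<lambda>r. INF i. decay_path r i)"
    by (rule locally_bilipschitz_incr_INF[OF decay_path_uniformly_bilipschitz decay_path_bdd_below])
  show "(INF i. decay_path 0 i) = 0" by (simp add: decay_path_nonpos)
  show "0 \<le> (INF i. decay_path r i)" for r by (intro cINF_greatest decay_path_nonneg) simp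
  show "\<exists>\<delta>>0. \<forall>r. 0 < r \<longrightarrow> r \<le> \<delta> \<longrightarrow> (INF i. decay_path r i) \<le> \<epsilon>" if eps: "0 < \<epsilon>" for \<epsilon>
  proof -
    obtain \<delta> where \<delta>: "0 < \<delta>" "\<forall>i r. 0 < r \<longrightarrow> r \<le> \<delta> \<longrightarrow> decay_path r i \<le> \<epsilon>"
      using decay_path_small[OF eps] by blast
    have "(INF i. decay_path r i) \<le> \<epsilon>" if "0 < r" "r \<le> \<delta>" for r
    proof -
      have "(INF i. decay_path r i) \<le> decay_path r undefined"
        by (rule cINF_lower[OF decay_path_bdd_below]) simp
      moreover have "decay_path r undefined \<le> \<epsilon>" using \<delta>(2) that by blast
      ultimately show ?thesis by linarith
    qed
    with \<delta>(1) show ?thesis by blast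
  qed
  show "\<exists>r\<ge>0. B < (INF i. decay_path r i)" for B
  proof -
    obtain r where "0 \<le> r" "\<forall>i. B + 1 < decay_path r i" using decay_path_unbounded by blast
    then have "B + 1 \<le> (INF i. decay_path r i)" by (intro cINF_greatest) (auto simp: less_imp_le)
    with \<open>0 \<le> r\<close> show ?thesis by (intro exI[of _ r]) auto
  qed
qed

lemma decay_path_SUP_class_Kinf: "class_Kinf (\<lambda>r. SUP i. decay_path r i)"
proof (rule class_Kinf_if_locally_bilipschitz_incr)
  show "locally_bilipschitz_incr (\<lambda>r. SUP i. decay_path r i)"
    by (rule locally_bilipschitz_incr_SUP[OF decay_path_uniformly_bilipschitz decay_path_bdd_above])
  show "(SUP i. decay_path 0 i) = 0" by (simp add: decay_path_nonpos)
  show "0 \<le> (SUP i. decay_path r i)" for r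
    using decay_path_nonneg[of r undefined] cSUP_upper[OF _ decay_path_bdd_above, of undefined r] by simp
  show "\<exists>\<delta>>0. \<forall>r. 0 < r \<longrightarrow> r \<le> \<delta> \<longrightarrow> (SUP i. decay_path r i) \<le> \<epsilon>" if eps: "0 < \<epsilon>" for \<epsilon>
  proof -
    obtain \<delta> where "0 < \<delta>" "\<forall>i r. 0 < r \<longrightarrow> r \<le> \<delta> \<longrightarrow> decay_path r i \<le> \<epsilon>"
      using decay_path_small[OF eps] by blast
    then show ?thesis by (intro exI[of _ \<delta>]) (auto intro: cSUP_least)
  qed
  show "\<exists>r\<ge>0. B < (SUP i. decay_path r i)" for B
  proof -
    obtain r where "0 \<le> r" "B < decay_path r undefined" using decay_path_unbounded by blast
    moreover have "decay_path r undefined \<le> (SUP i. decay_path r i)"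
      by (rule cSUP_upper[OF _ decay_path_bdd_above]) simp
    ultimately show ?thesis by (intro exI[of _ r]) simp
  qed
qed

theorem decay_path_is_path_of_strict_decay: "path_of_strict_decay Ii gam mu decay_path"
  unfolding path_of_strict_decay_def
proof (intro conjI allI impI)
  show "decay_path r \<in> linf_pos" for r by (rule decay_path_linf_pos)
  show "\<exists>\<rho>'. class_Kinf \<rho>' \<and> (\<forall>r\<ge>0. Gain_rho Ii gam mu \<rho>' (decay_path r) \<le> decay_path r)"
    using class_Kinf_cmult[OF rho, of "1/2"] decay_path_decay
    by (intro exI[of _ "\<lambda>x. \<rho> x / 2"]) (auto simp: le_fun_def)
  show "\<exists>\<phi>min \<phi>max. class_Kinf \<phi>min \<and> class_Kinf \<phi>max \<and>
      (\<forall>r\<ge>0. (\<lambda>_. \<phi>min r) \<le> decay_path r \<and> decay_path r \<le> (\<lambda>_. \<phi>max r))"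
    using decay_path_INF_class_Kinf decay_path_SUP_class_Kinf
      cINF_lower[OF decay_path_bdd_below] cSUP_upper[OF _ decay_path_bdd_above]
    by (intro exI[of _ "\<lambda>r. INF i. decay_path r i"] exI[of _ "\<lambda>r. SUP i. decay_path r i"])
      (auto simp: le_fun_def)
  show "class_Kinf (\<lambda>r. decay_path r i)" for i by (rule decay_path_class_Kinf)
  show "\<exists>l L. 0 < l \<and> l \<le> L \<and> (\<forall>r1\<in>{a..b}. \<forall>r2\<in>{a..b}. \<forall>i.
      l * \<bar>r1 - r2\<bar> \<le> \<bar>the_inv_into {0..} (\<lambda>r. decay_path r i) r1 - the_inv_into {0..} (\<lambda>r. decay_path r i) r2\<bar> \<and>
      \<bar>the_inv_into {0..} (\<lambda>r. decay_path r i) r1 - the_inv_into {0..} (\<lambda>r. decay_path r i) r2\<bar> \<le> L * \<bar>r1 - r2\<bar>)"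
    if "0 < a" "a \<le> b" for a b
    by (rule uniform_inverse_slopes[OF decay_path_class_Kinf decay_path_uniformly_bilipschitz
          decay_path_small decay_path_unbounded that])
qed

end

theorem proposition2p9:
  fixes Ii :: "'i::countable \<Rightarrow> 'i set"
    and gam :: "'i \<Rightarrow> 'i \<Rightarrow> real \<Rightarrow> real"
    and mu :: "'i \<Rightarrow> ('i \<Rightarrow> real) \<Rightarrow> ereal"
    and \<sigma> :: "real \<Rightarrow> ('i \<Rightarrow> real)"
  assumes gain: "gain_operator Ii gam mu"
    and range: "\<forall>r\<ge>0. \<sigma> r \<in> linf_pos"
    and cont: "\<forall>r0\<ge>0. \<forall>\<epsilon>>0. \<exists>\<delta>>0. \<forall>r\<ge>0. \<bar>r - r0\<bar> < \<delta> \<longrightarrow> supnorm (\<sigma> r - \<sigma> r0) < \<epsilon>"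
    and incr: "\<forall>r1 r2. 0 \<le> r1 \<longrightarrow> r1 \<le> r2 \<longrightarrow> \<sigma> r1 \<le> \<sigma> r2"
    and decay: "\<exists>\<rho>. class_Kinf \<rho> \<and> (\<forall>r\<ge>0. Gain_rho Ii gam mu \<rho> (\<sigma> r) \<le> \<sigma> r)"
    and bounds: "\<exists>\<phi>min \<phi>max. class_Kinf \<phi>min \<and> class_Kinf \<phi>max \<and>
        (\<forall>r\<ge>0. (\<lambda>_. \<phi>min r) \<le> \<sigma> r \<and> \<sigma> r \<le> (\<lambda>_. \<phi>max r))"
  shows "\<exists>\<sigma>'. path_of_strict_decay Ii gam mu \<sigma>'"
proof -
  obtain \<rho> where \<rho>: "class_Kinf \<rho>" "\<forall>r\<ge>0. Gain_rho Ii gam mu \<rho> (\<sigma> r) \<le> \<sigma> r"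
    using decay by blast
  obtain \<phi>min \<phi>max where \<phi>: "class_Kinf \<phi>min" "class_Kinf \<phi>max"
    "\<forall>r\<ge>0. (\<lambda>_. \<phi>min r) \<le> \<sigma> r \<and> \<sigma> r \<le> (\<lambda>_. \<phi>max r)"
    using bounds by blast
  interpret decay_path_setting Ii gam mu \<sigma> \<rho> \<phi>min \<phi>max
    by unfold_locales (fact gain range cont incr \<rho> \<phi>)+
  show ?thesis using decay_path_is_path_of_strict_decay by blast
qed

end
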